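(* Let $N\ge1$, $\omega\in C^+_{\mathrm{inc}}$, and let $(\rho_\varepsilon)_{\varepsilon>0}\subset L^1(\mathbb{R}^N)$ be a family of radial mollifiers of the form $\rho_\varepsilon(h)=\varepsilon^{-N}\rho(h/\varepsilon)$ for some $\rho\in L^1(\mathbb{R}^N)$. Then for $f\in L^\infty(\mathbb{R}^N)$ the following are equivalent: (i) $f\in C^{0,1}(\mathbb{R}^N)$; (ii) $\displaystyle\limsup_{\varepsilon\downarrow0}\int_{\mathbb{R}^N}\rho_\varepsilon(h)\,\omega\!\left(\frac{\|f(\cdot+h)-f\|_{L^\infty(\mathbb{R}^N)}}{|h|}\right)\mathrm{d}h<\infty$. Moreover, there are constants $0<c\le C$ independent of $f$ such that \[c\,\omega\big([f]_{C^{0,1}(\mathbb{R}^N)}\big)\le\limsup_{\varepsilon\downarrow0}\int_{\mathbb{R}^N}\rho_\varepsilon(h)\,\omega\!\left(\frac{\|f(\cdot+h)-f\|_{L^\infty(\mathbb{R}^N)}}{|h|}\right)\mathrm{d}h\le C\,\omega\big([f]_{C^{0,1}(\mathbb{R}^N)}\big).\]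
   Context: Mollifiers: $\rho_\varepsilon\ge0$, $\int\rho_\varepsilon=1$, and $\lim_{\varepsilon\downarrow0}\int_{|z|\ge\delta}\rho_\varepsilon=0$ for all $\delta>0$. $C^{0,1}(\mathbb{R}^N)$ is the set of $f\in L^\infty(\mathbb{R}^N)$ with $[f]_{C^{0,1}}:=\sup_{h\ne0}|h|^{-1}\|f(\cdot+h)-f\|_{L^\infty}<\infty$. $C^+_{\mathrm{inc}}$ is the set of continuous increasing $\omega:[0,\infty)\to[0,\infty)$ with $\omega(0)=0$, $\lim_{t\to\infty}\omega(t)=\infty$, and roughly subadditive: there is $A>0$ with $\omega(t_1+t_2)\le A(\omega(t_1)+\omega(t_2))$ for all $t_1,t_2\ge0$. Convention $\omega(+\infty)=+\infty$. *)

theory Defs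
  imports "HOL-Analysis.Analysis" "HOL-Probability.Essential_Supremum"
begin

definition C_inc_plus :: "(real \<Rightarrow> real) \<Rightarrow> bool" where
  "C_inc_plus \<omega> \<longleftrightarrow>
     continuous_on {0..} \<omega> \<and> mono_on {0..} \<omega> \<and> (\<forall>t\<ge>0. \<omega> t \<ge> 0) \<and> \<omega> 0 = 0 \<and>
     filterlim \<omega> at_top at_top \<and>
     (\<exists>A>0. \<forall>t1 t2. t1 \<ge> 0 \<longrightarrow> t2 \<ge> 0 \<longrightarrow> \<omega> (t1 + t2) \<le> A * (\<omega> t1 + \<omega> t2))"

definition omega_ext :: "(real \<Rightarrow> real) \<Rightarrow> ennreal \<Rightarrow> ennreal" where
  "omega_ext \<omega> x = (if x = \<infinity> then \<infinity> else ennreal (\<omega> (enn2real x)))"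

definition Linf_norm :: "('a::euclidean_space \<Rightarrow> real) \<Rightarrow> ennreal" where
  "Linf_norm g = esssup lebesgue (\<lambda>x. ennreal \<bar>g x\<bar>)"

definition in_Linf :: "('a::euclidean_space \<Rightarrow> real) \<Rightarrow> bool" where
  "in_Linf f \<longleftrightarrow> f \<in> borel_measurable lebesgue \<and> Linf_norm f < \<infinity>"

definition lip_seminorm :: "('a::euclidean_space \<Rightarrow> real) \<Rightarrow> ennreal" where
  "lip_seminorm f = (SUP h\<in>-{0}. Linf_norm (\<lambda>x. f (x + h) - f x) / ennreal (norm h))"

definition radial_mollifier :: "('a::euclidean_space \<Rightarrow> real) \<Rightarrow> bool" where
  "radial_mollifier \<rho> \<longleftrightarrow> integrable lebesgue \<rho> \<and> (\<forall>x. \<rho> x \<ge> 0) \<and>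
     integral\<^sup>L lebesgue \<rho> = 1 \<and> (\<forall>x y. norm x = norm y \<longrightarrow> \<rho> x = \<rho> y)"

definition rescale :: "('a::euclidean_space \<Rightarrow> real) \<Rightarrow> real \<Rightarrow> 'a \<Rightarrow> real" where
  "rescale \<rho> \<epsilon> h = (1 / \<epsilon>) ^ DIM('a) * \<rho> ((1 / \<epsilon>) *\<^sub>R h)"

definition mollified_functional ::
  "(real \<Rightarrow> real) \<Rightarrow> ('a::euclidean_space \<Rightarrow> real) \<Rightarrow> ('a \<Rightarrow> real) \<Rightarrow> ennreal" where
  "mollified_functional \<omega> \<rho> f = Limsup (at_right 0) (\<lambda>\<epsilon>.
     \<integral>\<^sup>+ h. ennreal (rescale \<rho> \<epsilon> h) *
        omega_ext \<omega> (Linf_norm (\<lambda>x. f (x + h) - f x) / ennreal (norm h)) \<partial>lebesgue)"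

end

theory Submission
  imports Defs
begin

(* The upper bound holds with C = 1: every rho_eps has mass one and the integrand is at most
   rho_eps(h) omega([f]).

   For the lower bound fix G with 5/4 G < [f] and call an increment h steep if
   ||f(. + h) - f||_inf > G |h|.  Since h |-> ||f(. + h) - f||_inf is subadditive, there is a p
   with ||f(. + p) - f||_inf > 5/4 G |p| all of whose dyadic fractions p/2^k share this property,
   and a reflection argument shows that at least half of each ball B(p/2^(k+1), |p|/2^(k+3))
   consists of steep increments.  Hence, for the dilation-invariant measure |h|^-N dh, the steep
   increments in an annulus spanning m dyadic scales have mass at least c (m + 1).  Averaging the
   mollified integrals over eps with weight d eps / eps, radiality of rho lets the kernels see
   this mass, while a bound y on the integrals near 0 only gives 2 m y for the average; hence the
   limsup is at least kappa omega(G) with kappa depending only on rho and N.  Taking G = [f]/2,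
   rough subadditivity omega([f]) <= 2 A omega([f]/2) yields the lower bound, and for [f] = infinity
   the unboundedness of omega makes the limsup infinite. *)

section \<open>Affine changes of variables\<close>

lemma lebesgue_affine_scaleR:
  fixes t :: "'a::euclidean_space"
  assumes "c \<noteq> 0"
  shows "lebesgue = density (distr lebesgue lebesgue (\<lambda>x. t + c *\<^sub>R x)) (\<lambda>_. ennreal (\<bar>c\<bar> ^ DIM('a)))"
    and "(\<lambda>x. t + c *\<^sub>R x) \<in> lebesgue \<rightarrow>\<^sub>M lebesgue"
proof -
  have "(\<lambda>x. t + (\<Sum>j\<in>(Basis::'a set). (c * (x \<bullet> j)) *\<^sub>R j)) = (\<lambda>x. t + c *\<^sub>R x)"
    unfolding scaleR_scaleR[symmetric] scaleR_sum_right[symmetric] euclidean_representation ..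
  then show "lebesgue = density (distr lebesgue lebesgue (\<lambda>x. t + c *\<^sub>R x)) (\<lambda>_. ennreal (\<bar>c\<bar> ^ DIM('a)))"
    and "(\<lambda>x. t + c *\<^sub>R x) \<in> lebesgue \<rightarrow>\<^sub>M lebesgue"
    using lebesgue_affine_euclidean[of "\<lambda>_. c" t] lebesgue_affine_measurable[of "\<lambda>_. c" t] assms
    by (simp_all add: prod_constant)
qed

lemma lebesgue_measurable_translation[measurable]:
  "(\<lambda>x::'a::euclidean_space. x + t) \<in> lebesgue \<rightarrow>\<^sub>M lebesgue"
  using lebesgue_affine_scaleR(2)[of 1 t] by (simp add: add.commute)

lemma nn_integral_lebesgue_affine:
  fixes f :: "'a::euclidean_space \<Rightarrow> ennreal"
  assumes [measurable]: "f \<in> borel_measurable lebesgue" and c: "c \<noteq> 0"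
  shows "(\<integral>\<^sup>+x. f x \<partial>lebesgue) = ennreal (\<bar>c\<bar> ^ DIM('a)) * (\<integral>\<^sup>+x. f (t + c *\<^sub>R x) \<partial>lebesgue)"
proof -
  let ?T = "\<lambda>x::'a. t + c *\<^sub>R x"
  have [measurable]: "?T \<in> lebesgue \<rightarrow>\<^sub>M lebesgue" using lebesgue_affine_scaleR(2)[OF c] .
  have "(\<integral>\<^sup>+x. f x \<partial>lebesgue) = (\<integral>\<^sup>+x. f x \<partial>density (distr lebesgue lebesgue ?T) (\<lambda>_. ennreal (\<bar>c\<bar> ^ DIM('a))))"
    using lebesgue_affine_scaleR(1)[OF c, of t] by simp
  also have "\<dots> = ennreal (\<bar>c\<bar> ^ DIM('a)) * (\<integral>\<^sup>+x. f x \<partial>distr lebesgue lebesgue ?T)"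
    by (simp add: nn_integral_density nn_integral_cmult)
  also have "\<dots> = ennreal (\<bar>c\<bar> ^ DIM('a)) * (\<integral>\<^sup>+x. f (?T x) \<partial>lebesgue)"
    by (simp add: nn_integral_distr)
  finally show ?thesis .
qed

lemma AE_lebesgue_translate:
  fixes P :: "'a::euclidean_space \<Rightarrow> bool"
  assumes [measurable]: "Measurable.pred lebesgue P" and "AE x in lebesgue. P x"
  shows "AE x in lebesgue. P (x + t)"
proof -
  have L: "lebesgue = density (distr lebesgue lebesgue (\<lambda>x. x + t)) (\<lambda>_. 1)"
    using lebesgue_affine_scaleR(1)[of 1 t] by (simp add: add.commute)
  have "AE x in density (distr lebesgue lebesgue (\<lambda>x. x + t)) (\<lambda>_. 1). P x"
    using assms(2) by (simp only: L[symmetric])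
  then have "AE x in distr lebesgue lebesgue (\<lambda>x. x + t). P x"
    by (simp add: AE_density)
  moreover have "{x \<in> space lebesgue. P x} \<in> sets lebesgue" by measurable
  ultimately show ?thesis
    by (subst (asm) AE_distr_iff) auto
qed

lemma emeasure_lborel_scaleR_preimage:
  fixes A :: "'a::euclidean_space set"
  assumes c: "c \<noteq> 0" and [measurable]: "A \<in> sets borel"
  shows "emeasure lborel {x. c *\<^sub>R x \<in> A} = ennreal (\<bar>1/c\<bar> ^ DIM('a)) * emeasure lborel A"
proof -
  have "{x. c *\<^sub>R x \<in> A} = (\<lambda>x. (1/c) *\<^sub>R x + 0) ` A"
    using c by (force intro: image_eqI[where x = "c *\<^sub>R _"])
  moreover have "{x. c *\<^sub>R x \<in> A} \<in> sets borel" by measurable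
  ultimately show ?thesis
    using emeasure_lebesgue_affine[of "1/c" 0 A] by simp
qed

lemma null_sets_scaleR_preimage:
  fixes A :: "'a::euclidean_space set"
  assumes "c \<noteq> 0" and "A \<in> null_sets lborel"
  shows "{x. c *\<^sub>R x \<in> A} \<in> null_sets lborel"
proof -
  have [measurable]: "A \<in> sets borel" using assms(2) by auto
  have "{x. c *\<^sub>R x \<in> A} \<in> sets borel" by measurable
  then show ?thesis
    using assms emeasure_lborel_scaleR_preimage[of c A] by (simp add: null_sets_def)
qed

section \<open>Essential increments\<close>

definition Linf_increment :: "('a::euclidean_space \<Rightarrow> real) \<Rightarrow> 'a \<Rightarrow> ennreal" where
  "Linf_increment f h = Linf_norm (\<lambda>x. f (x + h) - f x)"

lemma AE_le_Linf_increment: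
  "AE x in lebesgue. ennreal \<bar>f (x + h) - f x\<bar> \<le> Linf_increment f h"
  unfolding Linf_increment_def Linf_norm_def by (rule esssup_AE)

lemma Linf_increment_le:
  assumes [measurable]: "f \<in> borel_measurable lebesgue"
    and "AE x in lebesgue. ennreal \<bar>f (x + h) - f x\<bar> \<le> c"
  shows "Linf_increment f h \<le> c"
  unfolding Linf_increment_def Linf_norm_def using assms by (intro esssup_I) auto

lemma Linf_increment_0: "f \<in> borel_measurable lebesgue \<Longrightarrow> Linf_increment f 0 = 0"
  by (rule antisym[OF Linf_increment_le]) auto

lemma Linf_increment_add_le:
  assumes [measurable]: "f \<in> borel_measurable lebesgue"
  shows "Linf_increment f (h1 + h2) \<le> Linf_increment f h1 + Linf_increment f h2"
proof (rule Linf_increment_le)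
  have "AE x in lebesgue. ennreal \<bar>f (x + h2 + h1) - f (x + h2)\<bar> \<le> Linf_increment f h1"
    by (rule AE_lebesgue_translate[OF _ AE_le_Linf_increment]) measurable
  then show "AE x in lebesgue. ennreal \<bar>f (x + (h1 + h2)) - f x\<bar> \<le> Linf_increment f h1 + Linf_increment f h2"
    using AE_le_Linf_increment[of f h2]
  proof eventually_elim
    case (elim x)
    have "ennreal \<bar>f (x + (h1 + h2)) - f x\<bar> \<le> ennreal (\<bar>f (x + h2 + h1) - f (x + h2)\<bar> + \<bar>f (x + h2) - f x\<bar>)"
      by (intro ennreal_leI) (simp add: algebra_simps)
    also have "\<dots> \<le> Linf_increment f h1 + Linf_increment f h2"
      using elim by (simp add: ennreal_plus add_mono)
    finally show ?case .
  qed
qed (fact assms)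

lemma Linf_increment_cong_AE:
  assumes [measurable]: "f \<in> borel_measurable lebesgue" "g \<in> borel_measurable lebesgue"
    and "AE x in lebesgue. f x = g x"
  shows "Linf_increment f h = Linf_increment g h"
proof -
  have "AE x in lebesgue. f (x + h) = g (x + h)"
    by (rule AE_lebesgue_translate[OF _ assms(3)]) measurable
  with assms(3) have "AE x in lebesgue. ennreal \<bar>f (x + h) - f x\<bar> = ennreal \<bar>g (x + h) - g x\<bar>"
    by eventually_elim auto
  then show ?thesis
    unfolding Linf_increment_def Linf_norm_def by (intro esssup_AE_cong) auto
qed

lemma Linf_increment_gt_iff:
  fixes g :: "'a::euclidean_space \<Rightarrow> real"
  assumes [measurable]: "g \<in> borel_measurable borel"
  shows "c < Linf_increment g h \<longleftrightarrow> 0 < emeasure lborel {x. c < ennreal \<bar>g (x + h) - g x\<bar>}"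
proof -
  let ?S = "{x. c < ennreal \<bar>g (x + h) - g x\<bar>}"
  have [measurable]: "?S \<in> sets borel" by measurable
  have [measurable]: "g \<in> borel_measurable lebesgue"
    using assms by (metis measurable_completion measurable_lborel2)
  have "c < Linf_increment g h \<longleftrightarrow> 0 < emeasure lebesgue ?S"
  proof
    assume "c < Linf_increment g h"
    then show "0 < emeasure lebesgue ?S"
      using esssup_pos_measure[of "\<lambda>x. ennreal \<bar>g (x + h) - g x\<bar>" lebesgue c]
      unfolding Linf_increment_def Linf_norm_def by simp
  next
    assume pos: "0 < emeasure lebesgue ?S"
    show "c < Linf_increment g h"
    proof (rule ccontr)
      assume "\<not> c < Linf_increment g h"
      have "AE x in lebesgue. x \<notin> ?S"
        using AE_le_Linf_increment[of g h]
        by eventually_elim (use \<open>\<not> c < Linf_increment g h\<close> in \<open>auto simp: not_less\<close>)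
      then show False
        using pos by (subst (asm) AE_iff_measurable[where N = ?S]) auto
    qed
  qed
  then show ?thesis by simp
qed

section \<open>Steep increments\<close>

definition steep_increments :: "('a::euclidean_space \<Rightarrow> real) \<Rightarrow> real \<Rightarrow> 'a set" where
  "steep_increments f G = {h. ennreal (G * norm h) < Linf_increment f h}"

text \<open>A Borel version g of f has the same increments; h is steep iff the h-section of a Borel set
  of pairs (h, x) has positive measure, which is a Borel function of h by Tonelli.\<close>
lemma sets_steep_increments:
  fixes f :: "'a::euclidean_space \<Rightarrow> real"
  assumes [measurable]: "f \<in> borel_measurable lebesgue"
  shows "steep_increments f G \<in> sets borel"
proof -
  obtain g where g: "g \<in> borel_measurable lborel" and ae: "AE x in lborel. f x = g x"
    using completion_ex_borel_measurable_real[OF assms] by blast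
  have g'[measurable]: "g \<in> borel_measurable borel" using g by simp
  have [measurable]: "g \<in> borel_measurable lebesgue"
    using g by (metis measurable_completion measurable_lborel2)
  have [measurable]: "(\<lambda>p::'a \<times> 'a. g (snd p + fst p)) \<in> borel_measurable borel"
    "(\<lambda>p::'a \<times> 'a. g (snd p)) \<in> borel_measurable borel"
    "(\<lambda>p::'a \<times> 'a. norm (fst p)) \<in> borel_measurable borel"
    by (intro measurable_compose[OF _ g', unfolded comp_def] borel_measurable_continuous_onI
        continuous_intros)+
  define Q where "Q = {p::'a \<times> 'a. ennreal (G * norm (fst p)) < ennreal \<bar>g (snd p + fst p) - g (snd p)\<bar>}"
  have "Q \<in> sets (borel :: ('a \<times> 'a) measure)"
    unfolding Q_def by measurable
  then have "Q \<in> sets (lborel \<Otimes>\<^sub>M lborel)"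
    unfolding lborel_prod by simp
  then have [measurable]: "(\<lambda>h. emeasure lborel (Pair h -` Q)) \<in> borel_measurable lborel"
    by (rule lborel.measurable_emeasure_Pair)
  have "steep_increments f G = {h. 0 < emeasure lborel (Pair h -` Q)}"
    using Linf_increment_cong_AE[OF assms _ AE_completion[OF ae]]
    unfolding steep_increments_def Q_def by (simp add: Linf_increment_gt_iff vimage_def)
  also have "\<dots> \<in> sets borel" by measurable
  finally show ?thesis .
qed

lemma Linf_increment_dyadic_gt:
  assumes f: "f \<in> borel_measurable lebesgue" and K: "0 \<le> K"
    and p: "ennreal (K * norm p) < Linf_increment f p"
  shows "ennreal (K * norm (p /\<^sub>R 2 ^ k)) < Linf_increment f (p /\<^sub>R 2 ^ k)"
proof (induction k)
  case 0
  then show ?case using p by simp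
next
  case (Suc k)
  let ?q = "p /\<^sub>R 2 ^ Suc k"
  show ?case
  proof (rule ccontr)
    assume "\<not> ?case"
    then have "Linf_increment f ?q + Linf_increment f ?q \<le> ennreal (K * norm ?q) + ennreal (K * norm ?q)"
      by (intro add_mono) simp_all
    also have "\<dots> = ennreal (K * norm (p /\<^sub>R 2 ^ k))"
      using K by (simp add: ennreal_plus[symmetric])
    finally have "Linf_increment f (?q + ?q) \<le> ennreal (K * norm (p /\<^sub>R 2 ^ k))"
      using Linf_increment_add_le[OF f, of ?q ?q] by simp
    moreover have "?q + ?q = p /\<^sub>R 2 ^ k" by (simp add: scaleR_2[symmetric])
    ultimately show False using Suc.IH by simp
  qed
qed

lemma dist_reflection: "dist c (2 *\<^sub>R c - x) = dist c (x::'a::real_normed_vector)"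
proof -
  have "c - (2 *\<^sub>R c - x) = - (c - x)" by (simp add: scaleR_2 algebra_simps)
  then show ?thesis by (metis dist_norm norm_minus_cancel)
qed

lemma emeasure_ball_le_double_diff:
  fixes S :: "'a::euclidean_space set"
  assumes S: "S \<in> sets lebesgue"
    and reflect: "\<And>x. x \<in> ball c r \<Longrightarrow> x \<in> S \<Longrightarrow> 2 *\<^sub>R c - x \<notin> S"
  shows "emeasure lebesgue (ball c r) \<le> 2 * emeasure lebesgue (ball c r - S)"
proof -
  let ?B = "ball c r"
  have "(\<lambda>x. (-1) *\<^sub>R x + 2 *\<^sub>R c) ` (?B \<inter> S) \<subseteq> ?B - S"
  proof
    fix y assume "y \<in> (\<lambda>x. (-1) *\<^sub>R x + 2 *\<^sub>R c) ` (?B \<inter> S)"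
    then obtain x where x: "x \<in> ?B" "x \<in> S" "y = 2 *\<^sub>R c - x" by auto
    then show "y \<in> ?B - S" using reflect[OF x(1,2)] dist_reflection[of c x] by auto
  qed
  then have "emeasure lebesgue ((\<lambda>x. (-1) *\<^sub>R x + 2 *\<^sub>R c) ` (?B \<inter> S)) \<le> emeasure lebesgue (?B - S)"
    using S by (intro emeasure_mono) auto
  then have "emeasure lebesgue (?B \<inter> S) \<le> emeasure lebesgue (?B - S)"
    using emeasure_lebesgue_affine[of "-1" "2 *\<^sub>R c" "?B \<inter> S"] by simp
  moreover have "emeasure lebesgue ?B = emeasure lebesgue (?B \<inter> S) + emeasure lebesgue (?B - S)"
    using S by (subst plus_emeasure) (auto simp: Int_Diff_Un)
  ultimately show ?thesis
    by (simp add: mult_2 add_right_mono)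
qed

definition annulus :: "real \<Rightarrow> real \<Rightarrow> 'a::real_normed_vector set" where
  "annulus a b = {h. a \<le> norm h \<and> norm h \<le> b}"

lemma annulus_borel[measurable]: "annulus a b \<in> sets borel"
  unfolding annulus_def by measurable

lemma ball_half_subset_annulus:
  fixes q :: "'a::real_normed_vector"
  shows "ball (q /\<^sub>R 2) (norm q / 8) \<subseteq> annulus (3/8 * norm q) (5/8 * norm q)"
proof
  fix h assume "h \<in> ball (q /\<^sub>R 2) (norm q / 8)"
  then have d: "norm (h - q /\<^sub>R 2) < norm q / 8"
    by (simp add: dist_norm norm_minus_commute)
  have "norm (q /\<^sub>R 2) \<le> norm h + norm (h - q /\<^sub>R 2)" "norm h \<le> norm (q /\<^sub>R 2) + norm (h - q /\<^sub>R 2)"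
    using norm_triangle_sub[of "q /\<^sub>R 2" h] norm_triangle_sub[of h "q /\<^sub>R 2"]
    by (simp_all add: norm_minus_commute)
  then show "h \<in> annulus (3/8 * norm q) (5/8 * norm q)"
    using d by (simp add: annulus_def)
qed

text \<open>If x and h - x were both non-steep, subadditivity would give
  Linf_increment f h \<le> G (|x| + |h - x|) \<le> 5/4 G |h|.\<close>
lemma emeasure_ball_le_double_steep:
  fixes f :: "'a::euclidean_space \<Rightarrow> real"
  assumes f: "f \<in> borel_measurable lebesgue" and G: "0 \<le> G"
    and h: "ennreal (5/4 * G * norm h) < Linf_increment f h"
  shows "emeasure lebesgue (ball (h /\<^sub>R 2) (norm h / 8))
    \<le> 2 * emeasure lebesgue (ball (h /\<^sub>R 2) (norm h / 8) \<inter> steep_increments f G)"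
proof -
  let ?B = "ball (h /\<^sub>R 2) (norm h / 8)" and ?S = "- steep_increments f G"
  have "?S \<in> sets lebesgue"
    using sets_steep_increments[OF f, of G] by (simp add: sets.compl_sets)
  moreover have "x \<in> ?B \<Longrightarrow> x \<in> ?S \<Longrightarrow> 2 *\<^sub>R (h /\<^sub>R 2) - x \<notin> ?S" for x
  proof
    assume x: "x \<in> ?B" "x \<in> ?S" "2 *\<^sub>R (h /\<^sub>R 2) - x \<in> ?S"
    have "h - x \<in> ?B"
      using x(1) dist_reflection[of "h /\<^sub>R 2" x] by (simp only: mem_ball) simp
    then have norms: "norm x \<le> 5/8 * norm h" "norm (h - x) \<le> 5/8 * norm h"
      using x(1) ball_half_subset_annulus[of h] unfolding annulus_def by blast+
    have "Linf_increment f h \<le> Linf_increment f x + Linf_increment f (h - x)"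
      using Linf_increment_add_le[OF f, of x "h - x"] by simp
    also have "\<dots> \<le> ennreal (G * norm x) + ennreal (G * norm (h - x))"
      using x(2,3) by (intro add_mono) (auto simp: steep_increments_def not_less)
    also have "\<dots> = ennreal (G * (norm x + norm (h - x)))"
      using G by (subst ennreal_plus[symmetric]) (auto simp: distrib_left)
    also have "\<dots> \<le> ennreal (5/4 * G * norm h)"
      using mult_left_mono[OF add_mono[OF norms] G] by (intro ennreal_leI) simp
    finally show False using h by simp
  qed
  ultimately have "emeasure lebesgue ?B \<le> 2 * emeasure lebesgue (?B - ?S)"
    by (rule emeasure_ball_le_double_diff)
  then show ?thesis by (simp add: Diff_eq)
qed

definition dilation_measure :: "'a::euclidean_space measure" where
  "dilation_measure = density lborel (\<lambda>h. ennreal (1 / norm h ^ DIM('a)))"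

lemma sets_dilation_measure[simp, measurable_cong]: "sets dilation_measure = sets borel"
  by (simp add: dilation_measure_def)

lemma nn_integral_dilation_measure:
  fixes g :: "'a::euclidean_space \<Rightarrow> ennreal"
  assumes "g \<in> borel_measurable borel"
  shows "(\<integral>\<^sup>+h. g h \<partial>dilation_measure) = (\<integral>\<^sup>+h. ennreal (1 / norm h ^ DIM('a)) * g h \<partial>lborel)"
  using assms unfolding dilation_measure_def by (simp add: nn_integral_density)

lemma emeasure_dilation_measure:
  fixes A :: "'a::euclidean_space set"
  assumes "A \<in> sets borel"
  shows "emeasure dilation_measure A = (\<integral>\<^sup>+h. ennreal (1 / norm h ^ DIM('a)) * indicator A h \<partial>lborel)"
  using assms unfolding dilation_measure_def by (simp add: emeasure_density)

lemma emeasure_unit_ball: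
  obtains v where "0 < v" "emeasure lebesgue (ball (0::'a::euclidean_space) 1) = ennreal v"
proof
  show "0 < measure lborel (ball (0::'a) 1)"
    using content_ball_pos[of 1 "0::'a"] by simp
  show "emeasure lebesgue (ball (0::'a) 1) = ennreal (measure lborel (ball (0::'a) 1))"
    using emeasure_lborel_ball_finite[of "0::'a" 1] by (simp add: emeasure_eq_ennreal_measure)
qed

lemma emeasure_dilation_measure_ball_ge:
  fixes A :: "'a::euclidean_space set"
  assumes [measurable]: "A \<in> sets borel"
  shows "ennreal ((8 / (5 * norm q)) ^ DIM('a)) * emeasure lborel (A \<inter> ball (q /\<^sub>R 2) (norm q / 8))
    \<le> emeasure dilation_measure (A \<inter> ball (q /\<^sub>R 2) (norm q / 8))"
proof -
  let ?N = "DIM('a)" and ?B = "ball (q /\<^sub>R 2) (norm q / 8)"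
  have "ennreal ((8 / (5 * norm q)) ^ ?N) * emeasure lborel (A \<inter> ?B)
      = (\<integral>\<^sup>+h. ennreal ((8 / (5 * norm q)) ^ ?N) * indicator (A \<inter> ?B) h \<partial>lborel)"
    by (simp add: nn_integral_cmult_indicator)
  also have "\<dots> \<le> (\<integral>\<^sup>+h. ennreal (1 / norm h ^ ?N) * indicator (A \<inter> ?B) h \<partial>lborel)"
  proof (intro nn_integral_mono)
    fix h
    show "ennreal ((8 / (5 * norm q)) ^ ?N) * indicator (A \<inter> ?B) h
      \<le> ennreal (1 / norm h ^ ?N) * indicator (A \<inter> ?B) h"
    proof (cases "h \<in> ?B")
      case True
      then have "3/8 * norm q \<le> norm h" "norm h \<le> 5/8 * norm q"
        using ball_half_subset_annulus[of q] unfolding annulus_def by blast+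
      moreover have "0 < norm h" using True by auto
      ultimately have "0 < norm q" by linarith
      with \<open>norm h \<le> 5/8 * norm q\<close> \<open>0 < norm h\<close> have "8 / (5 * norm q) \<le> 1 / norm h"
        by (simp add: field_simps)
      then have "(8 / (5 * norm q)) ^ ?N \<le> 1 / norm h ^ ?N"
        by (metis power_mono power_one_over zero_le_divide_iff zero_le_numeral mult_nonneg_nonneg norm_ge_zero)
      then show ?thesis by (intro mult_right_mono ennreal_leI) auto
    qed simp
  qed
  also have "\<dots> = emeasure dilation_measure (A \<inter> ?B)"
    by (rule emeasure_dilation_measure[symmetric]) measurable
  finally show ?thesis .
qed

lemma emeasure_dilation_measure_steep_ball:
  fixes f :: "'a::euclidean_space \<Rightarrow> real"
  assumes f: "f \<in> borel_measurable lebesgue" and G: "0 \<le> G"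
    and q: "q \<noteq> 0" "ennreal (5/4 * G * norm q) < Linf_increment f q"
    and v: "0 < v" "emeasure lebesgue (ball (0::'a) 1) = ennreal v"
  shows "ennreal (v / (2 * 5 ^ DIM('a)))
    \<le> emeasure dilation_measure (steep_increments f G \<inter> ball (q /\<^sub>R 2) (norm q / 8))"
proof -
  let ?N = "DIM('a)" and ?B = "ball (q /\<^sub>R 2) (norm q / 8)" and ?S = "steep_increments f G"
  have [measurable]: "?S \<in> sets borel" using sets_steep_increments[OF f] .
  have nq: "0 < norm q" using q by simp
  have "ennreal ((norm q / 8) ^ ?N * v) = emeasure lebesgue ?B"
    using emeasure_lebesgue_ball_conv_unit_ball[of "norm q / 8" "q /\<^sub>R 2"] v by (simp add: ennreal_mult)
  also have "\<dots> \<le> 2 * emeasure lborel (?S \<inter> ?B)"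
    using emeasure_ball_le_double_steep[OF f G q(2)] by (simp add: Int_commute)
  finally have half: "ennreal ((norm q / 8) ^ ?N * v) \<le> 2 * emeasure lborel (?S \<inter> ?B)" .
  have dens: "ennreal ((8 / (5 * norm q)) ^ ?N) * emeasure lborel (?S \<inter> ?B)
    \<le> emeasure dilation_measure (?S \<inter> ?B)"
    by (rule emeasure_dilation_measure_ball_ge) measurable
  have "(8 / (5 * norm q)) ^ ?N * ((norm q / 8) ^ ?N * v) = ((8 / (5 * norm q)) * (norm q / 8)) ^ ?N * v"
    by (simp only: power_mult_distrib mult.assoc)
  also have "(8 / (5 * norm q)) * (norm q / 8) = 1 / 5" using nq by simp
  finally have "(8 / (5 * norm q)) ^ ?N * ((norm q / 8) ^ ?N * v) = 2 * (v / (2 * 5 ^ ?N))"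
    by (simp add: power_one_over)
  then have "2 * ennreal (v / (2 * 5 ^ ?N)) = ennreal ((8 / (5 * norm q)) ^ ?N) * ennreal ((norm q / 8) ^ ?N * v)"
    using v nq ennreal_mult'[of 2 "v / (2 * 5 ^ ?N)"] by (simp add: ennreal_mult[symmetric])
  also have "\<dots> \<le> ennreal ((8 / (5 * norm q)) ^ ?N) * (2 * emeasure lborel (?S \<inter> ?B))"
    by (rule mult_left_mono[OF half]) simp
  also have "\<dots> \<le> 2 * emeasure dilation_measure (?S \<inter> ?B)"
    using mult_left_mono[OF dens, of 2] by (simp add: mult_ac)
  finally show ?thesis
    using ennreal_mult_le_mult_iff[of 2] by simp
qed

lemma dyadic_annuli_disjoint:
  assumes "k < l" and "0 < s"
  shows "annulus (3/8 * s / 2 ^ k) (5/8 * s / 2 ^ k) \<inter> annulus (3/8 * s / 2 ^ l) (5/8 * s / 2 ^ l) = {}"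
proof -
  have "(2::real) ^ k * 2 \<le> 2 ^ l"
    using assms(1) by (metis power_Suc mult.commute power_increasing Suc_leI one_le_numeral)
  then have "5 * (2::real) ^ k < 3 * 2 ^ l"
    using zero_less_power[of "2::real" k] by linarith
  then have "5/8 * s / 2 ^ l < 3/8 * s / 2 ^ k"
    using assms(2) by (simp add: field_simps)
  then show ?thesis
    unfolding annulus_def by auto
qed

lemma dyadic_annulus_subset:
  assumes "k \<le> n" and "a \<le> 3/8 * s / 2 ^ n" and "5/8 * s \<le> b" and "0 \<le> s"
  shows "annulus (3/8 * s / 2 ^ k) (5/8 * s / 2 ^ k) \<subseteq> annulus a (b::real)"
proof -
  have "(2::real) ^ k \<le> 2 ^ n" using assms(1) by (intro power_increasing) auto
  then have "3/8 * s / 2 ^ n \<le> 3/8 * s / 2 ^ k"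
    using assms(4) by (intro divide_left_mono) auto
  moreover have "5/8 * s / 2 ^ k \<le> 5/8 * s"
    using assms(4) by (simp add: divide_le_eq mult_le_cancel_left1)
  ultimately show ?thesis
    using assms(2,3) unfolding annulus_def by auto
qed

text \<open>The balls attached to the dyadic fractions p/2^k of a steep increment p lie in pairwise
  disjoint annuli, and each carries dilation measure at least v/(2 5^N).\<close>
lemma emeasure_dilation_measure_steep_annulus:
  fixes f :: "'a::euclidean_space \<Rightarrow> real"
  assumes f: "f \<in> borel_measurable lebesgue" and G: "0 \<le> G"
    and p: "p \<noteq> 0" "ennreal (5/4 * G * norm p) < Linf_increment f p"
    and v: "0 < v" "emeasure lebesgue (ball (0::'a) 1) = ennreal v"
    and a: "a \<le> 3/8 * norm p / 2 ^ n" and b: "5/8 * norm p \<le> b"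
  shows "ennreal (real (n + 1) * (v / (2 * 5 ^ DIM('a))))
    \<le> emeasure dilation_measure (steep_increments f G \<inter> annulus a b)"
proof -
  let ?c = "v / (2 * 5 ^ DIM('a))"
  define q where "q k = p /\<^sub>R 2 ^ k" for k :: nat
  define S where "S k = steep_increments f G \<inter> ball (q k /\<^sub>R 2) (norm (q k) / 8)" for k
  have [measurable]: "steep_increments f G \<in> sets borel" using sets_steep_increments[OF f] .
  have [measurable]: "S k \<in> sets borel" for k unfolding S_def by measurable
  have norm_q: "norm (q k) = norm p / 2 ^ k" for k
    unfolding q_def by (simp add: divide_inverse mult.commute)
  have S_annulus: "S k \<subseteq> annulus (3/8 * norm p / 2 ^ k) (5/8 * norm p / 2 ^ k)" for k
    using ball_half_subset_annulus[of "q k"] unfolding S_def norm_q by auto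
  have S_ge: "ennreal ?c \<le> emeasure dilation_measure (S k)" for k
    unfolding S_def
  proof (rule emeasure_dilation_measure_steep_ball[OF f G _ _ v])
    show "q k \<noteq> 0" using p by (simp add: q_def)
    show "ennreal (5/4 * G * norm (q k)) < Linf_increment f (q k)"
      unfolding q_def using Linf_increment_dyadic_gt[OF f _ p(2)] G by simp
  qed
  have "S k \<inter> S l = {}" if "k < l" for k l
    using S_annulus[of k] S_annulus[of l] dyadic_annuli_disjoint[OF that, of "norm p"] p by auto
  then have disj: "disjoint_family_on S {..n}"
    unfolding disjoint_family_on_def by (metis Int_commute linorder_neqE_nat)
  have "(\<Union>k\<le>n. S k) \<subseteq> steep_increments f G \<inter> annulus a b"
  proof (intro UN_least Int_greatest)
    fix k assume "k \<in> {..n}"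
    then show "S k \<subseteq> annulus a b"
      using S_annulus[of k] dyadic_annulus_subset[of k n a "norm p" b] a b by auto
  qed (auto simp: S_def)
  then have "emeasure dilation_measure (\<Union>k\<le>n. S k)
      \<le> emeasure dilation_measure (steep_increments f G \<inter> annulus a b)"
    by (intro emeasure_mono) measurable
  moreover have "emeasure dilation_measure (\<Union>k\<le>n. S k) = (\<Sum>k\<le>n. emeasure dilation_measure (S k))"
    using disj by (intro sum_emeasure[symmetric]) auto
  moreover have "(\<Sum>k\<le>n. ennreal ?c) \<le> (\<Sum>k\<le>n. emeasure dilation_measure (S k))"
    by (intro sum_mono S_ge)
  moreover have "(\<Sum>k\<le>n. ennreal ?c) = ennreal (real (n + 1) * ?c)"
    using v by (subst ennreal_mult) (simp_all add: ennreal_of_nat_eq_real_of_nat)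
  ultimately show ?thesis by order
qed

section \<open>Radial functions\<close>

text \<open>Tonelli over [1,2] \<times> \<real>^N: for l \<in> [1,2] the set {u. l |u| \<in> T} has at least 2^-N times
  the measure of {u. |u| \<in> T}, while for u \<noteq> 0 the set of l with l |u| \<in> T is null.\<close>
lemma null_sets_norm_preimage:
  fixes T :: "real set"
  assumes T: "T \<in> null_sets lborel"
  shows "{u::'a::euclidean_space. norm u \<in> T} \<in> null_sets lborel"
proof -
  have [measurable]: "T \<in> sets borel" using T by auto
  define \<nu> where "\<nu> = emeasure (lborel :: 'a measure) {u. norm u \<in> T}"
  define F where "F l u = (indicator {1..2} l * indicator T (l * norm u) :: ennreal)" for l :: real and u :: 'a
  have Fm: "case_prod F \<in> borel_measurable (lborel \<Otimes>\<^sub>M lborel)"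
    unfolding F_def by measurable
  have dilate: "indicator {1..2} l * ennreal ((1/2) ^ DIM('a)) * \<nu> \<le> (\<integral>\<^sup>+u. F l u \<partial>lborel)" for l
  proof (cases "l \<in> {1..2}")
    case True
    have "ennreal ((1/2) ^ DIM('a)) * \<nu> \<le> ennreal (\<bar>1/l\<bar> ^ DIM('a)) * \<nu>"
      using True by (intro mult_right_mono ennreal_leI power_mono) (auto simp: field_simps)
    also have "\<dots> = emeasure lborel {u. l *\<^sub>R u \<in> {v::'a. norm v \<in> T}}"
      unfolding \<nu>_def using True by (intro emeasure_lborel_scaleR_preimage[symmetric]) auto
    also have "\<dots> = (\<integral>\<^sup>+u. indicator {u. l *\<^sub>R u \<in> {v::'a. norm v \<in> T}} u \<partial>lborel)"
      by (rule nn_integral_indicator[symmetric]) measurable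
    also have "\<dots> = (\<integral>\<^sup>+u. F l u \<partial>lborel)"
      unfolding F_def using True by (intro nn_integral_cong) (auto simp: indicator_def)
    finally show ?thesis using True by simp
  qed simp
  have ray: "AE u in lborel. (\<integral>\<^sup>+l. F l u \<partial>lborel) = 0"
    using AE_lborel_singleton[of "0::'a"]
  proof eventually_elim
    case (elim u)
    then have nu: "0 < norm u" by simp
    have "(\<integral>\<^sup>+l. F l u \<partial>lborel) \<le> (\<integral>\<^sup>+l. indicator T (0 + norm u * l) \<partial>lborel)"
      unfolding F_def by (intro nn_integral_mono) (auto simp: indicator_def mult.commute)
    also have "\<dots> = 0"
      using nn_integral_real_affine[of "indicator T" "norm u" 0] nu T
      by (simp add: nn_integral_indicator null_sets_def)
    finally show ?case by simp
  qed
  have "ennreal ((1/2) ^ DIM('a)) * \<nu> = (\<integral>\<^sup>+(l::real). indicator {1..2} l * ennreal ((1/2) ^ DIM('a)) * \<nu> \<partial>lborel)"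
    by (simp add: nn_integral_multc nn_integral_indicator)
  also have "\<dots> \<le> (\<integral>\<^sup>+l. (\<integral>\<^sup>+u. F l u \<partial>lborel) \<partial>lborel)"
    by (intro nn_integral_mono dilate)
  also have "\<dots> = (\<integral>\<^sup>+u. (\<integral>\<^sup>+l. F l u \<partial>lborel) \<partial>lborel)"
    by (rule lborel_pair.Fubini'[symmetric, OF Fm])
  also have "\<dots> = (\<integral>\<^sup>+(u::'a). 0 \<partial>lborel)"
    using ray by (intro nn_integral_cong_AE) auto
  finally show ?thesis
    unfolding \<nu>_def by (simp add: null_sets_def)
qed

definition radial_profile :: "('a::euclidean_space \<Rightarrow> real) \<Rightarrow> (real \<Rightarrow> real) \<Rightarrow> bool" where
  "radial_profile \<rho> P \<longleftrightarrow>
     P \<in> borel_measurable borel \<and> (AE t in lborel. \<forall>u. norm u = t \<longrightarrow> \<rho> u = P t)"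

lemma AE_ray_null_sets:
  fixes Z :: "'a::euclidean_space set"
  assumes Z: "Z \<in> null_sets lborel"
  shows "AE h in lborel. {s::real. s *\<^sub>R h \<in> Z} \<in> null_sets lborel"
proof -
  have [measurable]: "Z \<in> sets borel" using Z by auto
  define F where "F s h = (indicator Z (s *\<^sub>R h) :: ennreal)" for s :: real and h :: 'a
  have Fm: "case_prod F \<in> borel_measurable (lborel \<Otimes>\<^sub>M lborel)"
    unfolding F_def by measurable
  have F_ray: "(\<integral>\<^sup>+s. F s h \<partial>lborel) = emeasure lborel {s. s *\<^sub>R h \<in> Z}" for h
  proof -
    have "(\<integral>\<^sup>+s. F s h \<partial>lborel) = (\<integral>\<^sup>+s. indicator {s. s *\<^sub>R h \<in> Z} s \<partial>lborel)"
      unfolding F_def by (simp add: indicator_def)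
    also have "\<dots> = emeasure lborel {s. s *\<^sub>R h \<in> Z}"
      by (rule nn_integral_indicator) measurable
    finally show ?thesis .
  qed
  have "AE s in lborel. (\<integral>\<^sup>+h. F s h \<partial>lborel) = 0"
    using AE_lborel_singleton[of "0::real"]
  proof eventually_elim
    case (elim s)
    have "(\<integral>\<^sup>+h. F s h \<partial>lborel) = (\<integral>\<^sup>+h. indicator {h::'a. s *\<^sub>R h \<in> Z} h \<partial>lborel)"
      unfolding F_def by (simp add: indicator_def)
    also have "\<dots> = emeasure lborel {h::'a. s *\<^sub>R h \<in> Z}"
      by (rule nn_integral_indicator) measurable
    finally show ?case
      using null_sets_scaleR_preimage[OF elim Z] by auto
  qed
  then have "(\<integral>\<^sup>+h. (\<integral>\<^sup>+s. F s h \<partial>lborel) \<partial>lborel) = (\<integral>\<^sup>+(s::real). 0 \<partial>lborel)"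
    unfolding lborel_pair.Fubini'[OF Fm] by (rule nn_integral_cong_AE)
  then have "(\<integral>\<^sup>+h. (\<integral>\<^sup>+s. F s h \<partial>lborel) \<partial>lborel) = 0" by simp
  then have "AE h in lborel. (\<integral>\<^sup>+s. F s h \<partial>lborel) = 0"
    using Fm by (subst (asm) nn_integral_0_iff_AE) (measurable, simp)
  then show ?thesis
    by (rule eventually_mono) (simp add: F_ray null_sets_def)
qed

text \<open>A Lebesgue measurable function need not be measurable along a fixed ray, so the profile is
  read off a Borel version of \<rho> along a ray that meets the exceptional null set in a null set.\<close>
lemma radial_profile_exists:
  fixes \<rho> :: "'a::euclidean_space \<Rightarrow> real"
  assumes \<rho>: "\<rho> \<in> borel_measurable lebesgue" and rad: "\<And>x y. norm x = norm y \<Longrightarrow> \<rho> x = \<rho> y"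
  obtains P where "radial_profile \<rho> P"
proof -
  obtain \<rho>' where [measurable]: "\<rho>' \<in> borel_measurable borel" and ae: "AE x in lborel. \<rho> x = \<rho>' x"
    using completion_ex_borel_measurable_real[OF \<rho>] by auto
  from ae obtain Z where Z: "{x \<in> space lborel. \<rho> x \<noteq> \<rho>' x} \<subseteq> Z" "emeasure lborel Z = 0"
    "Z \<in> sets lborel"
    by (rule AE_E)
  then have "AE h in lborel. h \<noteq> (0::'a) \<and> {s::real. s *\<^sub>R h \<in> Z} \<in> null_sets lborel"
    using AE_ray_null_sets[of Z] AE_lborel_singleton[of "0::'a"] by (simp add: null_sets_def)
  moreover have "ae_filter (lborel :: 'a measure) \<noteq> bot"
    by (simp add: ae_filter_eq_bot_iff)
  ultimately obtain h0 :: 'a where h0: "h0 \<noteq> 0" "{s::real. s *\<^sub>R h0 \<in> Z} \<in> null_sets lborel"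
    using eventually_happens by blast
  then have "{t. (1 / norm h0) *\<^sub>R t \<in> {s. s *\<^sub>R h0 \<in> Z}} \<in> null_sets lborel"
    by (intro null_sets_scaleR_preimage) auto
  then have "AE t in lborel. (t / norm h0) *\<^sub>R h0 \<notin> Z"
    by (rule AE_not_in[THEN eventually_mono]) simp
  then have "AE t in lborel. \<forall>u. norm u = t \<longrightarrow> \<rho> u = \<rho>' ((t / norm h0) *\<^sub>R h0)"
  proof eventually_elim
    case (elim t)
    show ?case
    proof (intro allI impI)
      fix u :: 'a assume "norm u = t"
      then have "norm ((t / norm h0) *\<^sub>R h0) = norm u" using h0(1) by auto
      then have "\<rho> u = \<rho> ((t / norm h0) *\<^sub>R h0)" by (rule rad[symmetric])
      also have "\<dots> = \<rho>' ((t / norm h0) *\<^sub>R h0)" using Z(1) elim by (force simp: subset_iff)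
      finally show "\<rho> u = \<rho>' ((t / norm h0) *\<^sub>R h0)" .
    qed
  qed
  then show ?thesis
    by (intro that[of "\<lambda>t. \<rho>' ((t / norm h0) *\<^sub>R h0)"]) (simp add: radial_profile_def)
qed

lemma AE_lborel_scaleR:
  fixes Q :: "'a::euclidean_space \<Rightarrow> bool"
  assumes "c \<noteq> 0" and "AE x in lborel. Q x"
  shows "AE x in lborel. Q (c *\<^sub>R x)"
proof -
  obtain N where N: "{x \<in> space lborel. \<not> Q x} \<subseteq> N" "emeasure lborel N = 0" "N \<in> sets lborel"
    using assms(2) by (rule AE_E)
  then have "{x. c *\<^sub>R x \<in> N} \<in> null_sets lborel"
    using null_sets_scaleR_preimage[of c N] assms(1) by (simp add: null_sets_def)
  then show ?thesis
    by (rule AE_not_in[THEN eventually_mono]) (use N(1) in \<open>force simp: subset_iff\<close>)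
qed

lemma AE_lborel_norm:
  fixes Q :: "'a::euclidean_space \<Rightarrow> bool"
  assumes "AE t in lborel. \<forall>u. norm u = t \<longrightarrow> Q u"
  shows "AE u in lborel. Q u"
proof -
  obtain T where T: "{t \<in> space lborel. \<not> (\<forall>u. norm u = t \<longrightarrow> Q u)} \<subseteq> T"
    "emeasure lborel T = 0" "T \<in> sets lborel"
    using assms by (rule AE_E)
  then have "{u::'a. norm u \<in> T} \<in> null_sets lborel"
    by (intro null_sets_norm_preimage) (simp add: null_sets_def)
  then show ?thesis
    by (rule AE_not_in[THEN eventually_mono]) (use T(1) in \<open>force simp: subset_iff\<close>)
qed

lemma AE_radial_profile:
  assumes "radial_profile \<rho> P" and "0 < l"
  shows "AE h in lborel. \<rho> (l *\<^sub>R h) = P (l * norm h)"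
proof -
  have "AE t in lborel. \<forall>u. norm u = t \<longrightarrow> \<rho> u = P t"
    using assms(1) by (simp add: radial_profile_def)
  then have "AE t in lborel. \<forall>u. norm u = t \<longrightarrow> \<rho> u = P (norm u)"
    by (rule eventually_mono) blast
  then have "AE u in lborel. \<rho> u = P (norm u)"
    by (rule AE_lborel_norm)
  then have "AE h in lborel. \<rho> (l *\<^sub>R h) = P (norm (l *\<^sub>R h))"
    using assms(2) by (intro AE_lborel_scaleR) simp_all
  then show ?thesis
    by (rule eventually_mono) (use assms(2) in simp)
qed

lemma AE_nonpos_of_shell_integrals_eq_0:
  fixes P :: "real \<Rightarrow> real"
  assumes [measurable]: "P \<in> borel_measurable borel"
    and shell: "\<And>r0 R0. 0 < r0 \<Longrightarrow> r0 \<le> R0 \<Longrightarrow>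
      (\<integral>\<^sup>+s. indicator {r0..R0} s * ennreal (s ^ k * P s) \<partial>lborel) = 0"
  shows "AE s in lborel. 0 < s \<longrightarrow> P s \<le> 0"
proof -
  have "\<forall>n::nat. AE s in lborel. indicator {1 / (real n + 1)..real n + 1} s * ennreal (s ^ k * P s) = 0"
  proof
    fix n :: nat
    have "(\<integral>\<^sup>+s. indicator {1 / (real n + 1)..real n + 1} s * ennreal (s ^ k * P s) \<partial>lborel) = 0"
      by (rule shell) (simp_all add: field_simps)
    then show "AE s in lborel. indicator {1 / (real n + 1)..real n + 1} s * ennreal (s ^ k * P s) = 0"
      by (subst (asm) nn_integral_0_iff_AE) auto
  qed
  then have "AE s in lborel. \<forall>n::nat. indicator {1 / (real n + 1)..real n + 1} s * ennreal (s ^ k * P s) = 0"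
    unfolding AE_all_countable .
  then show ?thesis
  proof (rule eventually_mono, intro impI)
    fix s :: real
    assume zero: "\<forall>n::nat. indicator {1 / (real n + 1)..real n + 1} s * ennreal (s ^ k * P s) = 0"
      and s: "0 < s"
    obtain n :: nat where n: "s + 1 / s \<le> n" using real_arch_simple by blast
    have "0 < 1 / s" using s by simp
    then have "1 / s \<le> real n + 1" and "s \<le> real n + 1"
      using n s by linarith+
    then have "s \<in> {1 / (real n + 1)..real n + 1}"
      using s by (simp add: field_simps)
    then have "s ^ k * P s \<le> 0"
      using zero[rule_format, of n] by (simp add: ennreal_eq_0_iff)
    moreover have "0 < s ^ k" using s by simp
    ultimately show "P s \<le> 0"
      by (smt (verit) mult_pos_pos)
  qed
qed

lemma radial_profile_shell_integral_pos:
  fixes \<rho> :: "'a::euclidean_space \<Rightarrow> real"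
  assumes P: "radial_profile \<rho> P" and nz: "(\<integral>\<^sup>+u. ennreal (\<rho> u) \<partial>lborel) \<noteq> 0"
  obtains r0 R0 where "0 < r0" "r0 \<le> R0"
    "0 < (\<integral>\<^sup>+s. indicator {r0..R0} s * ennreal (s ^ (DIM('a) - 1) * P s) \<partial>lborel)"
proof -
  let ?J = "\<lambda>r0 R0. \<integral>\<^sup>+s. indicator {r0..R0} s * ennreal (s ^ (DIM('a) - 1) * P s) \<partial>lborel"
  have "\<exists>r0 R0. 0 < r0 \<and> r0 \<le> R0 \<and> 0 < ?J r0 R0"
  proof (rule ccontr)
    assume "\<nexists>r0 R0. 0 < r0 \<and> r0 \<le> R0 \<and> 0 < ?J r0 R0"
    then have "AE s in lborel. 0 < s \<longrightarrow> P s \<le> 0"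
      using P unfolding radial_profile_def
      by (intro AE_nonpos_of_shell_integrals_eq_0[where k = "DIM('a) - 1"]) (simp_all add: not_less, meson not_le)
    then have "AE t in lborel. \<forall>u. norm u = t \<longrightarrow> 0 < norm u \<longrightarrow> P (norm u) \<le> 0"
      by (rule eventually_mono) blast
    then have "AE u in lborel. 0 < norm u \<longrightarrow> P (norm u) \<le> 0"
      by (rule AE_lborel_norm)
    then have "AE u in lborel. ennreal (\<rho> u) = 0"
      using AE_radial_profile[OF P zero_less_one] AE_lborel_singleton[of "0::'a"]
      by eventually_elim (simp add: ennreal_eq_0_iff)
    then have "(\<integral>\<^sup>+u. ennreal (\<rho> u) \<partial>lborel) = (\<integral>\<^sup>+(u::'a). 0 \<partial>lborel)"
      by (rule nn_integral_cong_AE)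
    with nz show False by simp
  qed
  then show thesis using that by blast
qed

section \<open>Averaging the kernels over scales\<close>

lemma nn_integral_power_dilate:
  fixes P :: "real \<Rightarrow> real"
  assumes [measurable]: "P \<in> borel_measurable borel" and t: "0 < t" and N: "1 \<le> N"
  shows "(\<integral>\<^sup>+l. indicator {\<alpha>..\<beta>} l * ennreal (l ^ (N - 1) * P (l * t)) \<partial>lborel)
       = ennreal (1 / t ^ N) * (\<integral>\<^sup>+s. indicator {\<alpha> * t..\<beta> * t} s * ennreal (s ^ (N - 1) * P s) \<partial>lborel)"
proof -
  have "(\<integral>\<^sup>+s. indicator {\<alpha> * t..\<beta> * t} s * ennreal (s ^ (N - 1) * P s) \<partial>lborel)
      = ennreal \<bar>t\<bar> * (\<integral>\<^sup>+l. indicator {\<alpha> * t..\<beta> * t} (0 + t * l) * ennreal ((0 + t * l) ^ (N - 1) * P (0 + t * l)) \<partial>lborel)"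
    by (rule nn_integral_real_affine) (use t in auto)
  also have "(\<integral>\<^sup>+l. indicator {\<alpha> * t..\<beta> * t} (0 + t * l) * ennreal ((0 + t * l) ^ (N - 1) * P (0 + t * l)) \<partial>lborel)
      = (\<integral>\<^sup>+l. ennreal (t ^ (N - 1)) * (indicator {\<alpha>..\<beta>} l * ennreal (l ^ (N - 1) * P (l * t))) \<partial>lborel)"
  proof (intro nn_integral_cong)
    fix l :: real
    have "indicator {\<alpha> * t..\<beta> * t} (t * l) = (indicator {\<alpha>..\<beta>} l :: ennreal)"
      using t by (simp add: indicator_def mult.commute)
    moreover have "ennreal ((t * l) ^ (N - 1) * P (t * l)) = ennreal (t ^ (N - 1)) * ennreal (l ^ (N - 1) * P (l * t))"
      using t by (subst ennreal_mult'[symmetric]) (auto simp: power_mult_distrib mult.commute mult.left_commute)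
    ultimately show "indicator {\<alpha> * t..\<beta> * t} (0 + t * l) * ennreal ((0 + t * l) ^ (N - 1) * P (0 + t * l))
        = ennreal (t ^ (N - 1)) * (indicator {\<alpha>..\<beta>} l * ennreal (l ^ (N - 1) * P (l * t)))"
      by (simp add: mult_ac)
  qed
  also have "\<dots> = ennreal (t ^ (N - 1)) * (\<integral>\<^sup>+l. indicator {\<alpha>..\<beta>} l * ennreal (l ^ (N - 1) * P (l * t)) \<partial>lborel)"
    by (rule nn_integral_cmult) measurable
  also have "ennreal \<bar>t\<bar> * (ennreal (t ^ (N - 1)) * X) = ennreal (t ^ N) * X" for X
  proof -
    have "ennreal \<bar>t\<bar> * ennreal (t ^ (N - 1)) = ennreal (t ^ N)"
      using t N by (subst ennreal_mult[symmetric]) (auto simp: power_eq_if[of t N])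
    then show ?thesis by (simp add: mult.assoc[symmetric])
  qed
  finally have "(\<integral>\<^sup>+s. indicator {\<alpha> * t..\<beta> * t} s * ennreal (s ^ (N - 1) * P s) \<partial>lborel)
      = ennreal (t ^ N) * (\<integral>\<^sup>+l. indicator {\<alpha>..\<beta>} l * ennreal (l ^ (N - 1) * P (l * t)) \<partial>lborel)" .
  moreover have "ennreal (1 / t ^ N) * ennreal (t ^ N) = 1"
    using t by (subst ennreal_mult[symmetric]) auto
  ultimately show ?thesis
    by (simp add: mult.assoc[symmetric])
qed

lemma nn_integral_rescale_radial:
  fixes \<rho> :: "'a::euclidean_space \<Rightarrow> real" and g :: "'a \<Rightarrow> ennreal"
  assumes P: "radial_profile \<rho> P" and l: "0 < l" and [measurable]: "g \<in> borel_measurable borel"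
  shows "ennreal (1 / l) * (\<integral>\<^sup>+h. ennreal (rescale \<rho> (1 / l) h) * g h \<partial>lebesgue)
       = (\<integral>\<^sup>+h. ennreal (l ^ (DIM('a) - 1) * P (l * norm h)) * g h \<partial>lborel)"
proof -
  have [measurable]: "P \<in> borel_measurable borel" using P by (simp add: radial_profile_def)
  have "AE h in lborel. ennreal (rescale \<rho> (1 / l) h) * g h = ennreal (l ^ DIM('a) * P (l * norm h)) * g h"
    using AE_radial_profile[OF P l] by (rule eventually_mono) (simp add: rescale_def)
  then have "(\<integral>\<^sup>+h. ennreal (rescale \<rho> (1 / l) h) * g h \<partial>lebesgue)
      = (\<integral>\<^sup>+h. ennreal (l ^ DIM('a) * P (l * norm h)) * g h \<partial>lborel)"
    unfolding nn_integral_completion by (rule nn_integral_cong_AE)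
  also have "ennreal (1 / l) * \<dots> = (\<integral>\<^sup>+h. ennreal (1 / l) * (ennreal (l ^ DIM('a) * P (l * norm h)) * g h) \<partial>lborel)"
    by (rule nn_integral_cmult[symmetric]) measurable
  also have "\<dots> = (\<integral>\<^sup>+h. ennreal (l ^ (DIM('a) - 1) * P (l * norm h)) * g h \<partial>lborel)"
  proof (intro nn_integral_cong)
    fix h :: 'a
    have "1 / l * (l ^ DIM('a) * P (l * norm h)) = l ^ (DIM('a) - 1) * P (l * norm h)"
      using l by (simp add: power_eq_if[of l "DIM('a)"] field_simps)
    then show "ennreal (1 / l) * (ennreal (l ^ DIM('a) * P (l * norm h)) * g h)
        = ennreal (l ^ (DIM('a) - 1) * P (l * norm h)) * g h"
      using l by (simp add: ennreal_mult'[symmetric] mult.assoc[symmetric])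
  qed
  finally show ?thesis .
qed

lemma shell_integral_le_ray_integral:
  fixes P :: "real \<Rightarrow> real"
  assumes [measurable]: "P \<in> borel_measurable borel" and N: "1 \<le> N"
    and \<alpha>: "0 < \<alpha>" "\<alpha> \<le> \<beta>" and r0: "0 < r0" "r0 \<le> R0"
    and t: "R0 / \<beta> \<le> t" "t \<le> r0 / \<alpha>"
  shows "ennreal (1 / t ^ N) * (\<integral>\<^sup>+s. indicator {r0..R0} s * ennreal (s ^ (N - 1) * P s) \<partial>lborel)
    \<le> (\<integral>\<^sup>+l. indicator {\<alpha>..\<beta>} l * ennreal (l ^ (N - 1) * P (l * t)) \<partial>lborel)"
proof -
  have "0 < R0 / \<beta>" using r0 \<alpha> by simp
  then have t': "0 < t" "\<alpha> * t \<le> r0" "R0 \<le> \<beta> * t"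
    using t \<alpha> by (linarith, simp_all add: field_simps)
  have "(\<integral>\<^sup>+s. indicator {r0..R0} s * ennreal (s ^ (N - 1) * P s) \<partial>lborel)
      \<le> (\<integral>\<^sup>+s. indicator {\<alpha> * t..\<beta> * t} s * ennreal (s ^ (N - 1) * P s) \<partial>lborel)"
    using t' by (intro nn_integral_mono mult_right_mono) (auto simp: indicator_def)
  then show ?thesis
    unfolding nn_integral_power_dilate[OF assms(1) t'(1) N] by (intro mult_left_mono) simp_all
qed

text \<open>Averaging the kernels \<rho>_\<epsilon> over \<epsilon> = 1/l with weight dl/l turns them into a radial weight
  which, after the substitution s = l |h|, dominates the shell integral of the profile times the
  dilation-invariant density |h|^-N on a suitable annulus.\<close>
lemma log_average_rescale_ge:
  fixes \<rho> :: "'a::euclidean_space \<Rightarrow> real" and g :: "'a \<Rightarrow> ennreal"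
  assumes P: "radial_profile \<rho> P" and [measurable]: "g \<in> borel_measurable borel"
    and \<alpha>: "0 < \<alpha>" "\<alpha> \<le> \<beta>" and r0: "0 < r0" "r0 \<le> R0"
  shows "(\<integral>\<^sup>+s. indicator {r0..R0} s * ennreal (s ^ (DIM('a) - 1) * P s) \<partial>lborel) *
           (\<integral>\<^sup>+h. indicator (annulus (R0 / \<beta>) (r0 / \<alpha>)) h * g h \<partial>dilation_measure)
       \<le> (\<integral>\<^sup>+l. indicator {\<alpha>..\<beta>} l * ennreal (1 / l) *
              (\<integral>\<^sup>+h. ennreal (rescale \<rho> (1 / l) h) * g h \<partial>lebesgue) \<partial>lborel)"
proof -
  let ?N = "DIM('a)" and ?A = "annulus (R0 / \<beta>) (r0 / \<alpha>) :: 'a set"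
  define J where "J = (\<integral>\<^sup>+s. indicator {r0..R0} s * ennreal (s ^ (?N - 1) * P s) \<partial>lborel)"
  define k where "k l h = indicator {\<alpha>..\<beta>} l * ennreal (l ^ (?N - 1) * P (l * norm h)) * g h"
    for l :: real and h :: 'a
  have Pm[measurable]: "P \<in> borel_measurable borel" using P by (simp add: radial_profile_def)
  have km: "case_prod k \<in> borel_measurable (lborel \<Otimes>\<^sub>M lborel)"
    unfolding k_def by measurable
  have inner_h: "indicator {\<alpha>..\<beta>} l * ennreal (1 / l) * (\<integral>\<^sup>+h. ennreal (rescale \<rho> (1 / l) h) * g h \<partial>lebesgue)
      = (\<integral>\<^sup>+h. k l h \<partial>lborel)" for l
    using nn_integral_rescale_radial[OF P, of l g] \<alpha>(1)
    by (cases "l \<in> {\<alpha>..\<beta>}") (auto simp: k_def mult.assoc)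
  have inner_l: "J * (ennreal (1 / norm h ^ ?N) * (indicator ?A h * g h)) \<le> (\<integral>\<^sup>+l. k l h \<partial>lborel)" for h
  proof (cases "h \<in> ?A")
    case True
    then have "ennreal (1 / norm h ^ ?N) * J * g h
        \<le> (\<integral>\<^sup>+l. indicator {\<alpha>..\<beta>} l * ennreal (l ^ (?N - 1) * P (l * norm h)) \<partial>lborel) * g h"
      unfolding J_def annulus_def
      by (intro mult_right_mono shell_integral_le_ray_integral[OF Pm _ \<alpha> r0]) (simp_all add: DIM_positive Suc_le_eq)
    also have "\<dots> = (\<integral>\<^sup>+l. k l h \<partial>lborel)"
      unfolding k_def by (rule nn_integral_multc[symmetric]) measurable
    finally show ?thesis using True by (simp add: mult_ac)
  qed simp
  have "J * (\<integral>\<^sup>+h. indicator ?A h * g h \<partial>dilation_measure)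
      = (\<integral>\<^sup>+h. J * (ennreal (1 / norm h ^ ?N) * (indicator ?A h * g h)) \<partial>lborel)"
    by (simp add: nn_integral_dilation_measure nn_integral_cmult)
  also have "\<dots> \<le> (\<integral>\<^sup>+h. (\<integral>\<^sup>+l. k l h \<partial>lborel) \<partial>lborel)"
    by (intro nn_integral_mono inner_l)
  also have "\<dots> = (\<integral>\<^sup>+l. (\<integral>\<^sup>+h. k l h \<partial>lborel) \<partial>lborel)"
    by (rule lborel_pair.Fubini'[OF km])
  finally show ?thesis
    unfolding J_def inner_h[symmetric] .
qed

section \<open>The upper bound\<close>

lemma omega_ext_mono:
  assumes "mono_on {0..} \<omega>" and "x \<le> y"
  shows "omega_ext \<omega> x \<le> omega_ext \<omega> y"
proof (cases "y = \<infinity>")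
  case False
  then have "x \<noteq> \<infinity>" "enn2real x \<le> enn2real y"
    using assms(2) by (auto simp: top_unique enn2real_mono top.not_eq_extremum)
  then show ?thesis
    using False mono_onD[OF assms(1)] by (simp add: omega_ext_def ennreal_leI)
qed (simp add: omega_ext_def)

definition mollified_integral ::
  "(real \<Rightarrow> real) \<Rightarrow> ('a::euclidean_space \<Rightarrow> real) \<Rightarrow> ('a \<Rightarrow> real) \<Rightarrow> real \<Rightarrow> ennreal" where
  "mollified_integral \<omega> \<rho> f \<epsilon> =
     (\<integral>\<^sup>+h. ennreal (rescale \<rho> \<epsilon> h) * omega_ext \<omega> (Linf_increment f h / ennreal (norm h)) \<partial>lebesgue)"

lemma mollified_functional_eq_Limsup:
  "mollified_functional \<omega> \<rho> f = Limsup (at_right 0) (mollified_integral \<omega> \<rho> f)"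
  unfolding mollified_functional_def mollified_integral_def[abs_def] Linf_increment_def ..

lemma rescale_measurable[measurable]:
  assumes [measurable]: "\<rho> \<in> borel_measurable lebesgue"
  shows "rescale \<rho> \<epsilon> \<in> borel_measurable lebesgue"
  unfolding rescale_def[abs_def] by measurable

lemma nn_integral_rescale:
  fixes \<rho> :: "'a::euclidean_space \<Rightarrow> real"
  assumes "radial_mollifier \<rho>" and "0 < \<epsilon>"
  shows "(\<integral>\<^sup>+h. ennreal (rescale \<rho> \<epsilon> h) \<partial>lebesgue) = 1"
proof -
  have int: "integrable lebesgue \<rho>" and "\<And>x. 0 \<le> \<rho> x" and "integral\<^sup>L lebesgue \<rho> = 1"
    using assms(1) unfolding radial_mollifier_def by blast+
  then have one: "(\<integral>\<^sup>+u. ennreal (\<rho> u) \<partial>lebesgue) = 1"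
    by (simp add: nn_integral_eq_integral)
  have [measurable]: "\<rho> \<in> borel_measurable lebesgue" using int by (rule borel_measurable_integrable)
  have "(\<integral>\<^sup>+h. ennreal (rescale \<rho> \<epsilon> h) \<partial>lebesgue)
      = ennreal (\<bar>\<epsilon>\<bar> ^ DIM('a)) * (\<integral>\<^sup>+u. ennreal (rescale \<rho> \<epsilon> (0 + \<epsilon> *\<^sub>R u)) \<partial>lebesgue)"
    using assms(2) by (intro nn_integral_lebesgue_affine) auto
  also have "\<dots> = ennreal (\<bar>\<epsilon>\<bar> ^ DIM('a)) * (\<integral>\<^sup>+u. ennreal ((1 / \<epsilon>) ^ DIM('a)) * ennreal (\<rho> u) \<partial>lebesgue)"
    using assms(2) by (simp add: rescale_def ennreal_mult')
  also have "\<dots> = ennreal (\<bar>\<epsilon>\<bar> ^ DIM('a)) * ennreal ((1 / \<epsilon>) ^ DIM('a)) * (\<integral>\<^sup>+u. ennreal (\<rho> u) \<partial>lebesgue)"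
    by (simp add: nn_integral_cmult mult.assoc)
  also have "ennreal (\<bar>\<epsilon>\<bar> ^ DIM('a)) * ennreal ((1 / \<epsilon>) ^ DIM('a)) = 1"
    using assms(2) by (subst ennreal_mult[symmetric]) (auto simp: power_mult_distrib[symmetric])
  finally show ?thesis using one by simp
qed

lemma Linf_increment_div_norm_le_lip_seminorm:
  assumes "f \<in> borel_measurable lebesgue"
  shows "Linf_increment f h / ennreal (norm h) \<le> lip_seminorm f"
proof (cases "h = 0")
  case True
  then show ?thesis using Linf_increment_0[OF assms] by simp
next
  case False
  then show ?thesis
    unfolding lip_seminorm_def Linf_increment_def by (intro SUP_upper) auto
qed

lemma mollified_functional_le:
  fixes f \<rho> :: "'a::euclidean_space \<Rightarrow> real"
  assumes "radial_mollifier \<rho>" and "mono_on {0..} \<omega>" and "f \<in> borel_measurable lebesgue"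
  shows "mollified_functional \<omega> \<rho> f \<le> omega_ext \<omega> (lip_seminorm f)"
  unfolding mollified_functional_eq_Limsup
proof (rule Limsup_bounded)
  have [measurable]: "\<rho> \<in> borel_measurable lebesgue"
    using assms(1) by (simp add: radial_mollifier_def borel_measurable_integrable)
  have "mollified_integral \<omega> \<rho> f \<epsilon> \<le> omega_ext \<omega> (lip_seminorm f)" if "0 < \<epsilon>" for \<epsilon>
  proof -
    have "mollified_integral \<omega> \<rho> f \<epsilon> \<le> (\<integral>\<^sup>+h. ennreal (rescale \<rho> \<epsilon> h) * omega_ext \<omega> (lip_seminorm f) \<partial>lebesgue)"
      unfolding mollified_integral_def
      by (intro nn_integral_mono mult_left_mono omega_ext_mono[OF assms(2)]
          Linf_increment_div_norm_le_lip_seminorm[OF assms(3)]) simp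
    also have "\<dots> = omega_ext \<omega> (lip_seminorm f)"
      using nn_integral_rescale[OF assms(1) that] by (simp add: nn_integral_multc)
    finally show ?thesis .
  qed
  then show "\<forall>\<^sub>F \<epsilon> in at_right 0. mollified_integral \<omega> \<rho> f \<epsilon> \<le> omega_ext \<omega> (lip_seminorm f)"
    by (auto simp: eventually_at_right_field intro!: exI[of _ 1])
qed

section \<open>The lower bound\<close>

lemma lip_seminorm_gt_imp_steep:
  assumes "ennreal K < lip_seminorm f" and "0 \<le> K"
  obtains p where "p \<noteq> 0" "ennreal (K * norm p) < Linf_increment f p"
proof -
  obtain p where p: "p \<noteq> 0" "ennreal K < Linf_increment f p / ennreal (norm p)"
    using assms(1) unfolding lip_seminorm_def less_SUP_iff Linf_increment_def by auto
  have "ennreal K * ennreal (norm p) < Linf_increment f p"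
  proof (rule ccontr)
    assume "\<not> ?thesis"
    then have "Linf_increment f p / ennreal (norm p) \<le> ennreal K"
      using p(1) by (intro divide_le_posI_ennreal) (auto simp: mult.commute)
    then show False using p(2) by simp
  qed
  then show ?thesis
    using that p(1) assms(2) by (simp add: ennreal_mult)
qed

lemma omega_le_omega_ext_steep:
  assumes "mono_on {0..} \<omega>" and G: "0 \<le> G" and f: "f \<in> borel_measurable lebesgue"
    and h: "h \<in> steep_increments f G"
  shows "ennreal (\<omega> G) \<le> omega_ext \<omega> (Linf_increment f h / ennreal (norm h))"
proof -
  have steep: "ennreal G * ennreal (norm h) < Linf_increment f h"
    using h G by (simp add: steep_increments_def ennreal_mult)
  then have "h \<noteq> 0"
    using Linf_increment_0[OF f] by auto
  have "ennreal G \<le> Linf_increment f h / ennreal (norm h)"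
  proof (rule ccontr)
    assume "\<not> ?thesis"
    then have "Linf_increment f h < ennreal G * ennreal (norm h)"
      using \<open>h \<noteq> 0\<close> by (simp add: not_le divide_less_ennreal)
    then show False using steep by simp
  qed
  then have "omega_ext \<omega> (ennreal G) \<le> omega_ext \<omega> (Linf_increment f h / ennreal (norm h))"
    by (rule omega_ext_mono[OF assms(1)])
  then show ?thesis using G by (simp add: omega_ext_def)
qed

lemma mollified_integral_ge_steep:
  assumes "mono_on {0..} \<omega>" and "0 \<le> G" and "f \<in> borel_measurable lebesgue"
  shows "(\<integral>\<^sup>+h. ennreal (rescale \<rho> \<epsilon> h) * (ennreal (\<omega> G) * indicator (steep_increments f G) h) \<partial>lebesgue)
    \<le> mollified_integral \<omega> \<rho> f \<epsilon>"
  unfolding mollified_integral_def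
  using omega_le_omega_ext_steep[OF assms]
  by (intro nn_integral_mono mult_left_mono) (auto simp: indicator_def)

lemma nn_integral_inverse_dyadic_le:
  assumes "0 < \<alpha>"
  shows "(\<integral>\<^sup>+l. indicator {\<alpha>..\<alpha> * 2 ^ M} l * ennreal (1 / l) \<partial>lborel) \<le> of_nat M"
proof (induction M)
  case 0
  have "(\<integral>\<^sup>+l. indicator {\<alpha>..\<alpha> * 2 ^ 0} l * ennreal (1 / l) \<partial>lborel)
      \<le> (\<integral>\<^sup>+l. indicator {\<alpha>..\<alpha>} l * ennreal (1 / \<alpha>) \<partial>lborel)"
    by (intro nn_integral_mono) (auto simp: indicator_def)
  then show ?case by (simp add: nn_integral_multc)
next
  case (Suc M)
  let ?a = "\<alpha> * 2 ^ M"
  have a: "0 < ?a" using assms by simp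
  have "(\<integral>\<^sup>+l. indicator {\<alpha>..\<alpha> * 2 ^ Suc M} l * ennreal (1 / l) \<partial>lborel)
      \<le> (\<integral>\<^sup>+l. indicator {\<alpha>..?a} l * ennreal (1 / l) + indicator {?a..2 * ?a} l * ennreal (1 / ?a) \<partial>lborel)"
  proof (intro nn_integral_mono)
    fix l :: real
    show "indicator {\<alpha>..\<alpha> * 2 ^ Suc M} l * ennreal (1 / l)
        \<le> indicator {\<alpha>..?a} l * ennreal (1 / l) + indicator {?a..2 * ?a} l * ennreal (1 / ?a)"
    proof (cases "l \<le> ?a")
      case False
      then have "1 / l \<le> 1 / ?a" using a by (intro divide_left_mono) auto
      then show ?thesis using False by (auto simp: indicator_def mult_ac intro: ennreal_leI)
    qed (auto simp: indicator_def)
  qed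
  also have "\<dots> = (\<integral>\<^sup>+l. indicator {\<alpha>..?a} l * ennreal (1 / l) \<partial>lborel) + ennreal (?a * (1 / ?a))"
    using a by (subst nn_integral_add) (auto simp: nn_integral_multc ennreal_mult[symmetric])
  also have "\<dots> \<le> of_nat M + 1"
    using a Suc.IH by (intro add_mono) auto
  finally show ?case by (simp add: add.commute)
qed

lemma log_average_le:
  assumes "0 < \<alpha>" and "\<And>l. l \<in> {\<alpha>..\<alpha> * 2 ^ M} \<Longrightarrow> F l \<le> y"
  shows "(\<integral>\<^sup>+l. indicator {\<alpha>..\<alpha> * 2 ^ M} l * ennreal (1 / l) * F l \<partial>lborel) \<le> of_nat M * y"
proof -
  have "(\<integral>\<^sup>+l. indicator {\<alpha>..\<alpha> * 2 ^ M} l * ennreal (1 / l) * F l \<partial>lborel)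
      \<le> (\<integral>\<^sup>+l. indicator {\<alpha>..\<alpha> * 2 ^ M} l * ennreal (1 / l) * y \<partial>lborel)"
    using assms(2) by (intro nn_integral_mono) (auto simp: indicator_def intro: mult_left_mono)
  also have "\<dots> = (\<integral>\<^sup>+l. indicator {\<alpha>..\<alpha> * 2 ^ M} l * ennreal (1 / l) \<partial>lborel) * y"
    by (rule nn_integral_multc) measurable
  also have "\<dots> \<le> of_nat M * y"
    by (intro mult_right_mono nn_integral_inverse_dyadic_le assms(1)) simp
  finally show ?thesis .
qed

lemma steep_annulus_at_small_scale:
  fixes f :: "'a::euclidean_space \<Rightarrow> real"
  assumes f: "f \<in> borel_measurable lebesgue" and G: "0 \<le> G"
    and p: "p \<noteq> 0" "ennreal (5/4 * G * norm p) < Linf_increment f p"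
    and v: "0 < v" "emeasure lebesgue (ball (0::'a) 1) = ennreal v"
    and r0: "0 < r0" and m: "5 * R0 < 3 * r0 * 2 ^ m" and \<delta>: "0 < \<delta>"
  obtains \<alpha> where "\<delta> < \<alpha>"
    "ennreal (real (m + 1) * (v / (2 * 5 ^ DIM('a))))
      \<le> emeasure dilation_measure (steep_increments f G \<inter> annulus (R0 / (\<alpha> * 2 ^ (2 * m))) (r0 / \<alpha>))"
proof -
  obtain j :: nat where j: "norm p * 5 * \<delta> / (8 * r0) < 2 ^ j"
    using real_arch_pow[of 2] by auto
  define q where "q = p /\<^sub>R 2 ^ j"
  have q: "q \<noteq> 0" "ennreal (5/4 * G * norm q) < Linf_increment f q"
    unfolding q_def using p Linf_increment_dyadic_gt[OF f _ p(2)] G by (simp_all add: mult.assoc)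
  have nq: "norm q = norm p / 2 ^ j" "0 < norm q"
    using q(1) unfolding q_def by (simp_all add: divide_inverse mult.commute)
  define \<alpha> where "\<alpha> = 8 * r0 / (5 * norm q)"
  have \<alpha>: "0 < \<alpha>" unfolding \<alpha>_def using r0 nq(2) by simp
  show ?thesis
  proof
    have "norm p * 5 * \<delta> < 8 * r0 * 2 ^ j"
      using j r0 by (simp add: pos_divide_less_eq mult_ac)
    then have "5 * norm q * \<delta> < 8 * r0"
      unfolding nq(1) by (simp add: pos_divide_less_eq mult_ac)
    then show "\<delta> < \<alpha>"
      unfolding \<alpha>_def using nq(2) by (simp add: field_simps)
    have "R0 \<le> 3/8 * norm q * \<alpha> * 2 ^ m"
      using m nq(2) unfolding \<alpha>_def by (simp add: field_simps)
    then have "R0 / (\<alpha> * 2 ^ (2 * m)) \<le> 3/8 * norm q / 2 ^ m"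
      using \<alpha> by (simp add: field_simps power_mult power2_eq_square)
    moreover have "5/8 * norm q \<le> r0 / \<alpha>"
      unfolding \<alpha>_def using nq(2) r0 by (simp add: field_simps)
    ultimately show "ennreal (real (m + 1) * (v / (2 * 5 ^ DIM('a))))
      \<le> emeasure dilation_measure (steep_increments f G \<inter> annulus (R0 / (\<alpha> * 2 ^ (2 * m))) (r0 / \<alpha>))"
      by (rule emeasure_dilation_measure_steep_annulus[OF f G q v])
  qed
qed

lemma steep_mass_le_log_average:
  fixes \<rho> f :: "'a::euclidean_space \<Rightarrow> real"
  assumes P: "radial_profile \<rho> P" and mono: "mono_on {0..} \<omega>"
    and f: "f \<in> borel_measurable lebesgue" and G: "0 \<le> G"
    and \<alpha>: "0 < \<alpha>" "\<alpha> \<le> \<beta>" and r0: "0 < r0" "r0 \<le> R0"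
  shows "(\<integral>\<^sup>+s. indicator {r0..R0} s * ennreal (s ^ (DIM('a) - 1) * P s) \<partial>lborel) *
      (ennreal (\<omega> G) * emeasure dilation_measure (steep_increments f G \<inter> annulus (R0 / \<beta>) (r0 / \<alpha>)))
    \<le> (\<integral>\<^sup>+l. indicator {\<alpha>..\<beta>} l * ennreal (1 / l) * mollified_integral \<omega> \<rho> f (1 / l) \<partial>lborel)"
proof -
  let ?S = "steep_increments f G" and ?A = "annulus (R0 / \<beta>) (r0 / \<alpha>) :: 'a set"
  have [measurable]: "?S \<in> sets borel" using sets_steep_increments[OF f] .
  have "ennreal (\<omega> G) * emeasure dilation_measure (?S \<inter> ?A)
      = (\<integral>\<^sup>+h. ennreal (\<omega> G) * indicator (?S \<inter> ?A) h \<partial>dilation_measure)"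
    by (rule nn_integral_cmult_indicator[symmetric]) measurable
  also have "\<dots> = (\<integral>\<^sup>+h. indicator ?A h * (ennreal (\<omega> G) * indicator ?S h) \<partial>dilation_measure)"
    by (intro nn_integral_cong) (simp add: indicator_inter_arith mult_ac)
  finally have "(\<integral>\<^sup>+s. indicator {r0..R0} s * ennreal (s ^ (DIM('a) - 1) * P s) \<partial>lborel) *
      (ennreal (\<omega> G) * emeasure dilation_measure (?S \<inter> ?A))
    \<le> (\<integral>\<^sup>+l. indicator {\<alpha>..\<beta>} l * ennreal (1 / l) *
      (\<integral>\<^sup>+h. ennreal (rescale \<rho> (1 / l) h) * (ennreal (\<omega> G) * indicator ?S h) \<partial>lebesgue) \<partial>lborel)"
    using log_average_rescale_ge[OF P _ \<alpha> r0, of "\<lambda>h. ennreal (\<omega> G) * indicator ?S h"] by simp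
  also have "\<dots> \<le> (\<integral>\<^sup>+l. indicator {\<alpha>..\<beta>} l * ennreal (1 / l) * mollified_integral \<omega> \<rho> f (1 / l) \<partial>lborel)"
    by (intro nn_integral_mono mult_left_mono mollified_integral_ge_steep[OF mono G f]) simp
  finally show ?thesis .
qed

lemma steep_mass_le_mollified_bound:
  fixes \<rho> f :: "'a::euclidean_space \<Rightarrow> real"
  assumes P: "radial_profile \<rho> P" and r0: "0 < r0" "r0 \<le> R0"
    and j0: "0 < j0" "ennreal j0 \<le> (\<integral>\<^sup>+s. indicator {r0..R0} s * ennreal (s ^ (DIM('a) - 1) * P s) \<partial>lborel)"
    and v: "0 < v" "emeasure lebesgue (ball (0::'a) 1) = ennreal v"
    and mono: "mono_on {0..} \<omega>" and f: "f \<in> borel_measurable lebesgue" and G: "0 \<le> G" "0 \<le> \<omega> G"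
    and p: "p \<noteq> 0" "ennreal (5/4 * G * norm p) < Linf_increment f p"
    and m: "5 * R0 < 3 * r0 * 2 ^ m"
    and b: "0 < b" "\<And>\<epsilon>. 0 < \<epsilon> \<Longrightarrow> \<epsilon> < b \<Longrightarrow> mollified_integral \<omega> \<rho> f \<epsilon> \<le> y"
  shows "ennreal (j0 * (\<omega> G * (real (m + 1) * (v / (2 * 5 ^ DIM('a)))))) \<le> of_nat (2 * m) * y"
proof -
  let ?c = "v / (2 * 5 ^ DIM('a))" and ?S = "steep_increments f G"
  obtain \<alpha> where \<alpha>: "1 / b < \<alpha>" and mass: "ennreal (real (m + 1) * ?c)
      \<le> emeasure dilation_measure (?S \<inter> annulus (R0 / (\<alpha> * 2 ^ (2 * m))) (r0 / \<alpha>))"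
    using steep_annulus_at_small_scale[OF f G(1) p v r0(1) m, of "1 / b"] b(1) by auto
  have "0 < 1 / b" using b(1) by simp
  then have \<alpha>_pos: "0 < \<alpha>" using \<alpha> by linarith
  have "ennreal (j0 * (\<omega> G * (real (m + 1) * ?c)))
      = ennreal j0 * (ennreal (\<omega> G) * ennreal (real (m + 1) * ?c))"
    using less_imp_le[OF j0(1)] G(2) by (simp only: ennreal_mult'[symmetric])
  also have "\<dots> \<le> (\<integral>\<^sup>+s. indicator {r0..R0} s * ennreal (s ^ (DIM('a) - 1) * P s) \<partial>lborel) *
      (ennreal (\<omega> G) * emeasure dilation_measure (?S \<inter> annulus (R0 / (\<alpha> * 2 ^ (2 * m))) (r0 / \<alpha>)))"
    by (intro mult_mono j0(2) mult_left_mono[OF mass]) simp_all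
  also have "\<dots> \<le> (\<integral>\<^sup>+l. indicator {\<alpha>..\<alpha> * 2 ^ (2 * m)} l * ennreal (1 / l) * mollified_integral \<omega> \<rho> f (1 / l) \<partial>lborel)"
    using \<alpha>_pos r0 by (intro steep_mass_le_log_average[OF P mono f G(1)]) simp_all
  also have "\<dots> \<le> of_nat (2 * m) * y"
  proof (rule log_average_le[OF \<alpha>_pos])
    fix l assume "l \<in> {\<alpha>..\<alpha> * 2 ^ (2 * m)}"
    then have "\<alpha> \<le> l" by simp
    then have "0 < 1 / l" "1 / l \<le> 1 / \<alpha>"
      using \<alpha>_pos by (simp, intro divide_left_mono) auto
    moreover have "1 / \<alpha> < b"
      using \<alpha> \<alpha>_pos b(1) by (simp add: field_simps)
    ultimately show "mollified_integral \<omega> \<rho> f (1 / l) \<le> y"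
      using b(2) by simp
  qed
  finally show ?thesis .
qed

text \<open>If the mollified integrals stayed below y on (0, b), their log-average over 2m dyadic
  scales near 0 would be at most 2m y; but that average also sees the steep increments, whose
  dilation measure grows like m + 1, so y cannot be as small as \<kappa> \<omega>(G).\<close>
lemma mollified_functional_ge_steep:
  fixes \<rho> f :: "'a::euclidean_space \<Rightarrow> real"
  assumes P: "radial_profile \<rho> P" and r0: "0 < r0" "r0 \<le> R0"
    and j0: "0 < j0" "ennreal j0 \<le> (\<integral>\<^sup>+s. indicator {r0..R0} s * ennreal (s ^ (DIM('a) - 1) * P s) \<partial>lborel)"
    and v: "0 < v" "emeasure lebesgue (ball (0::'a) 1) = ennreal v"
    and mono: "mono_on {0..} \<omega>" and f: "f \<in> borel_measurable lebesgue" and G: "0 \<le> G"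
    and p: "p \<noteq> 0" "ennreal (5/4 * G * norm p) < Linf_increment f p"
  shows "ennreal (j0 * v / (4 * 5 ^ DIM('a)) * \<omega> G) \<le> mollified_functional \<omega> \<rho> f"
proof (rule ccontr)
  let ?c = "v / (2 * 5 ^ DIM('a))"
  define y where "y = ennreal (j0 * v / (4 * 5 ^ DIM('a)) * \<omega> G)"
  assume "\<not> ?thesis"
  then have "Limsup (at_right 0) (mollified_integral \<omega> \<rho> f) < y"
    unfolding y_def mollified_functional_eq_Limsup by simp
  then have "\<forall>\<^sub>F \<epsilon> in at_right 0. mollified_integral \<omega> \<rho> f \<epsilon> < y"
    by (rule Limsup_lessD)
  then obtain b where b: "0 < b" "\<And>\<epsilon>. 0 < \<epsilon> \<Longrightarrow> \<epsilon> < b \<Longrightarrow> mollified_integral \<omega> \<rho> f \<epsilon> < y"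
    unfolding eventually_at_right_field by auto
  have "0 < y"
    using b(2)[of "b / 2"] b(1) by (auto intro: le_less_trans[OF zero_le])
  then have \<omega>G: "0 < \<omega> G"
    using mult_pos_pos[OF j0(1) v(1)] unfolding y_def by (simp add: zero_less_mult_iff zero_less_divide_iff)
  obtain m :: nat where "5 * R0 / (3 * r0) < 2 ^ m"
    using real_arch_pow[of 2 "5 * R0 / (3 * r0)"] by auto
  then have "5 * R0 < 3 * r0 * 2 ^ m"
    using r0 by (simp add: pos_divide_less_eq mult_ac)
  then have "ennreal (j0 * (\<omega> G * (real (m + 1) * ?c))) \<le> of_nat (2 * m) * y"
    using b \<omega>G by (intro steep_mass_le_mollified_bound[OF P r0 j0 v mono f G _ p]) (auto intro: less_imp_le)
  also have "\<dots> = ennreal (real (2 * m) * (j0 * v / (4 * 5 ^ DIM('a)) * \<omega> G))"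
    unfolding y_def by (simp only: ennreal_of_nat_eq_real_of_nat ennreal_mult'[symmetric] of_nat_0_le_iff)
  finally have "j0 * (\<omega> G * (real (m + 1) * ?c)) \<le> real (2 * m) * (j0 * v / (4 * 5 ^ DIM('a)) * \<omega> G)"
    using j0(1) v(1) \<omega>G by (simp add: ennreal_le_iff)
  moreover have "j0 * (\<omega> G * (real (m + 1) * ?c)) = real m * (j0 * \<omega> G * ?c) + j0 * \<omega> G * ?c"
    "real (2 * m) * (j0 * v / (4 * 5 ^ DIM('a)) * \<omega> G) = real m * (j0 * \<omega> G * ?c)"
    by (simp_all add: field_simps)
  moreover have "0 < j0 * \<omega> G * ?c"
    using j0(1) v(1) \<omega>G by simp
  ultimately show False
    by linarith
qed

lemma mollified_functional_lower_bound:
  fixes \<rho> :: "'a::euclidean_space \<Rightarrow> real"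
  assumes \<rho>: "radial_mollifier \<rho>" and mono: "mono_on {0..} \<omega>"
  obtains \<kappa> where "0 < \<kappa>"
    "\<And>f G. f \<in> borel_measurable lebesgue \<Longrightarrow> 0 \<le> G \<Longrightarrow> ennreal (5/4 * G) < lip_seminorm f \<Longrightarrow>
      ennreal (\<kappa> * \<omega> G) \<le> mollified_functional \<omega> \<rho> f"
proof -
  have int: "integrable lebesgue \<rho>" and nonneg: "\<And>x. 0 \<le> \<rho> x" and one: "integral\<^sup>L lebesgue \<rho> = 1"
    and rad: "\<And>x y. norm x = norm y \<Longrightarrow> \<rho> x = \<rho> y"
    using \<rho> unfolding radial_mollifier_def by blast+
  have "(\<integral>\<^sup>+u. ennreal (\<rho> u) \<partial>lebesgue) = 1"
    using int nonneg one by (simp add: nn_integral_eq_integral)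
  then have nz: "(\<integral>\<^sup>+u. ennreal (\<rho> u) \<partial>lborel) \<noteq> 0"
    by (simp add: nn_integral_completion)
  obtain P where P: "radial_profile \<rho> P"
    using radial_profile_exists[OF borel_measurable_integrable[OF int] rad] .
  obtain r0 R0 where r0: "0 < r0" "r0 \<le> R0"
    and J: "0 < (\<integral>\<^sup>+s. indicator {r0..R0} s * ennreal (s ^ (DIM('a) - 1) * P s) \<partial>lborel)"
    using radial_profile_shell_integral_pos[OF P nz] .
  obtain j0 where j0: "0 < j0"
    "ennreal j0 \<le> (\<integral>\<^sup>+s. indicator {r0..R0} s * ennreal (s ^ (DIM('a) - 1) * P s) \<partial>lborel)"
  proof (cases "(\<integral>\<^sup>+s. indicator {r0..R0} s * ennreal (s ^ (DIM('a) - 1) * P s) \<partial>lborel)" rule: ennreal_cases)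
    case (real r)
    then show ?thesis using that[of r] J by simp
  next
    case top
    then show ?thesis using that[of 1] by simp
  qed
  obtain v where v: "0 < v" "emeasure lebesgue (ball (0::'a) 1) = ennreal v"
    by (rule emeasure_unit_ball)
  show ?thesis
  proof
    show "0 < j0 * v / (4 * 5 ^ DIM('a))" using j0(1) v(1) by simp
    fix f :: "'a \<Rightarrow> real" and G
    assume f: "f \<in> borel_measurable lebesgue" and G: "0 \<le> G" and L: "ennreal (5/4 * G) < lip_seminorm f"
    obtain p where "p \<noteq> 0" "ennreal (5/4 * G * norm p) < Linf_increment f p"
      using lip_seminorm_gt_imp_steep[OF L] G by (simp add: mult.assoc) blast
    then show "ennreal (j0 * v / (4 * 5 ^ DIM('a)) * \<omega> G) \<le> mollified_functional \<omega> \<rho> f"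
      by (rule mollified_functional_ge_steep[OF P r0 j0 v mono f G])
  qed
qed

lemma unbounded_le_imp_eq_top:
  fixes \<omega> :: "real \<Rightarrow> real" and X :: ennreal
  assumes lim: "filterlim \<omega> at_top at_top" and \<kappa>: "0 < \<kappa>"
    and bound: "\<And>G. 0 \<le> G \<Longrightarrow> ennreal (\<kappa> * \<omega> G) \<le> X"
  shows "X = \<infinity>"
proof (rule ccontr)
  assume "X \<noteq> \<infinity>"
  then obtain x where x: "X = ennreal x" "0 \<le> x" by (cases X rule: ennreal_cases) auto
  have "\<forall>\<^sub>F G in at_top. x / \<kappa> + 1 \<le> \<omega> G"
    using lim by (simp add: filterlim_at_top)
  then obtain G0 where G0: "\<And>G. G0 \<le> G \<Longrightarrow> x / \<kappa> + 1 \<le> \<omega> G"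
    by (auto simp: eventually_at_top_linorder)
  define G where "G = max G0 0"
  have G: "0 \<le> G" "x / \<kappa> + 1 \<le> \<omega> G"
    unfolding G_def by (simp_all add: G0)
  have "ennreal (\<kappa> * \<omega> G) \<le> ennreal x"
    using bound[OF G(1)] x(1) by simp
  then have "\<kappa> * \<omega> G \<le> x"
    using x(2) by simp
  moreover have "x + \<kappa> \<le> \<kappa> * \<omega> G"
    using mult_left_mono[OF G(2), of \<kappa>] \<kappa> by (simp add: distrib_left)
  ultimately show False using \<kappa> by simp
qed

text \<open>Rough subadditivity gives \<omega>(L) \<le> 2A \<omega>(L/2), and G = L/2 satisfies 5/4 G < L.\<close>
lemma C_inc_plus_omega_ext_le:
  assumes \<omega>: "C_inc_plus \<omega>" and \<kappa>: "0 < \<kappa>"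
  obtains c where "0 < c" "c \<le> 1"
    "\<And>L X. (\<And>G. 0 \<le> G \<Longrightarrow> ennreal (5/4 * G) < L \<Longrightarrow> ennreal (\<kappa> * \<omega> G) \<le> X) \<Longrightarrow>
      ennreal c * omega_ext \<omega> L \<le> X"
proof -
  have \<omega>_nonneg: "\<And>t. 0 \<le> t \<Longrightarrow> 0 \<le> \<omega> t" and "\<omega> 0 = 0" and lim: "filterlim \<omega> at_top at_top"
    using \<omega> unfolding C_inc_plus_def by blast+
  obtain A where A: "0 < A" "\<And>t1 t2. 0 \<le> t1 \<Longrightarrow> 0 \<le> t2 \<Longrightarrow> \<omega> (t1 + t2) \<le> A * (\<omega> t1 + \<omega> t2)"
    using \<omega> unfolding C_inc_plus_def by blast
  define c where "c = min 1 (\<kappa> / (2 * A))"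
  show ?thesis
  proof
    show "0 < c" "c \<le> 1" unfolding c_def using \<kappa> A(1) by auto
    fix L X
    assume bound: "\<And>G. 0 \<le> G \<Longrightarrow> ennreal (5/4 * G) < L \<Longrightarrow> ennreal (\<kappa> * \<omega> G) \<le> X"
    show "ennreal c * omega_ext \<omega> L \<le> X"
    proof (cases L rule: ennreal_cases)
      case top
      have "X = \<infinity>"
      proof (rule unbounded_le_imp_eq_top[OF lim \<kappa>])
        fix G :: real assume "0 \<le> G"
        then show "ennreal (\<kappa> * \<omega> G) \<le> X" using top by (intro bound) simp_all
      qed
      then show ?thesis by simp
    next
      case (real l)
      show ?thesis
      proof (cases "l = 0")
        case True
        then show ?thesis using real \<open>\<omega> 0 = 0\<close> by (simp add: omega_ext_def)
      next
        case False
        then have l: "0 < l" using real by simp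
        have "\<omega> l \<le> A * (\<omega> (l/2) + \<omega> (l/2))" using A(2)[of "l/2" "l/2"] l by simp
        then have "c * \<omega> l \<le> \<kappa> / (2 * A) * (2 * A * \<omega> (l/2))"
          using \<omega>_nonneg[of l] \<kappa> A(1) l unfolding c_def
          by (intro mult_mono) auto
        also have "\<dots> = \<kappa> * \<omega> (l/2)" using A(1) by simp
        finally have "ennreal c * omega_ext \<omega> L \<le> ennreal (\<kappa> * \<omega> (l/2))"
          using real l \<open>0 < c\<close> by (simp add: omega_ext_def ennreal_mult'[symmetric] ennreal_leI)
        also have "\<dots> \<le> X"
          using real l by (intro bound) (auto simp: ennreal_less_iff)
        finally show ?thesis .
      qed
    qed
  qed
qed

lemma less_top_iff_of_omega_ext_bounds:
  assumes lower: "ennreal c * omega_ext \<omega> L \<le> M" and upper: "M \<le> omega_ext \<omega> L" and c: "0 < c"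
  shows "L < \<infinity> \<longleftrightarrow> M < \<infinity>"
proof -
  have "L < \<infinity> \<longleftrightarrow> omega_ext \<omega> L < \<infinity>"
    by (simp add: omega_ext_def top.not_eq_extremum)
  also have "\<dots> \<longleftrightarrow> M < \<infinity>"
  proof
    assume "M < \<infinity>"
    with lower have "ennreal c * omega_ext \<omega> L < \<infinity>"
      by (rule le_less_trans)
    then show "omega_ext \<omega> L < \<infinity>"
      using c by (auto simp: ennreal_mult_less_top)
  qed (rule le_less_trans[OF upper])
  finally show ?thesis .
qed

lemma mollified_functional_ge_omega_ext:
  fixes \<rho> :: "'a::euclidean_space \<Rightarrow> real"
  assumes \<omega>: "C_inc_plus \<omega>" and \<rho>: "radial_mollifier \<rho>"
  obtains c where "0 < c" "c \<le> 1" "\<And>f. f \<in> borel_measurable lebesgue \<Longrightarrow>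
    ennreal c * omega_ext \<omega> (lip_seminorm f) \<le> mollified_functional \<omega> \<rho> f"
proof -
  have "mono_on {0..} \<omega>" using \<omega> by (simp add: C_inc_plus_def)
  then obtain \<kappa> where \<kappa>: "0 < \<kappa>"
    "\<And>f G. f \<in> borel_measurable lebesgue \<Longrightarrow> 0 \<le> G \<Longrightarrow> ennreal (5/4 * G) < lip_seminorm f \<Longrightarrow>
      ennreal (\<kappa> * \<omega> G) \<le> mollified_functional \<omega> \<rho> f"
    using mollified_functional_lower_bound[OF \<rho>] by blast
  obtain c where c: "0 < c" "c \<le> 1"
    "\<And>L X. (\<And>G. 0 \<le> G \<Longrightarrow> ennreal (5/4 * G) < L \<Longrightarrow> ennreal (\<kappa> * \<omega> G) \<le> X) \<Longrightarrow>
      ennreal c * omega_ext \<omega> L \<le> X"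
    using C_inc_plus_omega_ext_le[OF \<omega> \<kappa>(1)] by blast
  show ?thesis
    using that[OF c(1,2)] c(3) \<kappa>(2) by blast
qed

theorem theorem2p5:
  fixes \<omega> :: "real \<Rightarrow> real" and \<rho> :: "real ^ 'n \<Rightarrow> real"
  assumes "C_inc_plus \<omega>" and "radial_mollifier \<rho>"
  shows "\<exists>c C. 0 < c \<and> c \<le> C \<and>
    (\<forall>f :: real ^ 'n \<Rightarrow> real. in_Linf f \<longrightarrow>
       (lip_seminorm f < \<infinity> \<longleftrightarrow> mollified_functional \<omega> \<rho> f < \<infinity>) \<and>
       ennreal c * omega_ext \<omega> (lip_seminorm f) \<le> mollified_functional \<omega> \<rho> f \<and>
       mollified_functional \<omega> \<rho> f \<le> ennreal C * omega_ext \<omega> (lip_seminorm f))"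
proof -
  have mono: "mono_on {0..} \<omega>" using assms(1) by (simp add: C_inc_plus_def)
  obtain c where c: "0 < c" "c \<le> 1" "\<And>f :: real ^ 'n \<Rightarrow> real. f \<in> borel_measurable lebesgue \<Longrightarrow>
      ennreal c * omega_ext \<omega> (lip_seminorm f) \<le> mollified_functional \<omega> \<rho> f"
    using mollified_functional_ge_omega_ext[OF assms] by blast
  have "(lip_seminorm f < \<infinity> \<longleftrightarrow> mollified_functional \<omega> \<rho> f < \<infinity>) \<and>
      ennreal c * omega_ext \<omega> (lip_seminorm f) \<le> mollified_functional \<omega> \<rho> f \<and>
      mollified_functional \<omega> \<rho> f \<le> ennreal 1 * omega_ext \<omega> (lip_seminorm f)"
    if "in_Linf f" for f :: "real ^ 'n \<Rightarrow> real"
  proof -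
    have f: "f \<in> borel_measurable lebesgue" using that by (simp add: in_Linf_def)
    note lower = c(3)[OF f]
    have upper: "mollified_functional \<omega> \<rho> f \<le> omega_ext \<omega> (lip_seminorm f)"
      by (rule mollified_functional_le[OF assms(2) mono f])
    show ?thesis
      using less_top_iff_of_omega_ext_bounds[OF lower upper c(1)] lower upper by simp
  qed
  then show ?thesis using c(1,2) by blast
qed

end
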